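(* Let $T_0,T$ be spanning trees of $G$ and $M_0=M_{T_0}$. Then $\Psi_{M_0}(M_T)$ is the class in $K(G^+)$ of the divisor $\chi\in\mathbb Z^W$ with $\chi(w_e)=1$ if the edge $e$ of $G$ has different directions in $O_{T_0}$ and $O_T$, and $\chi(w_e)=0$ otherwise.
   Context: $G$ is a finite connected planar graph (multi-edges allowed, no loops) with a fixed embedding in the plane, and $q$ is a fixed vertex of $G$ lying on the boundary of the infinite (outer) face. Let $G^\vee$ be the planar dual and $q^*$ the dual vertex of the outer face. Superimpose $G$ and $G^\vee$ so that each edge $e$ of $G$ crosses exactly its dual edge $e^*$, place a new vertex $w_e$ at each crossing, so each edge of $G$ and of $G^\vee$ is split into two half-edges; then delete $q$, $q^*$ and all half-edges incident to them. The resulting planar bipartite graph is $G^+$, with white vertices $W=\{w_e: e\in E(G)\}$ and black vertices the vertices of $G$ other than $q$ and the bounded faces of $G$. For a spanning tree $T$ of $G$, the orientation $O_T$ of $G$ orients each edge of $T$ away from $q$ and each edge $e\notin T$ counterclockwise around the unique cycle in $T\cup\{e\}$. Given an orientation $O$ of $G$, the induced orientation $\widehat O$ of $G^+$ is: each half-edge of an edge $e$ of $G$ is oriented in the direction of $e$ in $O$; each half-edge of a dual edge $e^*$ is oriented as the $90^\circ$ counterclockwise rotation of the $O$-direction of $e$. An edge of $G^+$ is positively oriented if it points from its white endpoint to its black endpoint, negatively oriented otherwise. The Temperley matching $M_T$ consists of, for each $e\in T$, the positively oriented (in $\widehat{O_T}$) half-edge of $e$ at $w_e$, and for each $e\notin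 T$, the positively oriented half-edge of $e^*$ at $w_e$. Kasteleyn cokernel: for a $q$-connected orientation $O$ and each black vertex $b$ let $r_b\in\mathbb Z^W$ have $w$-coordinate equal to (number of edges between $w$ and $b$ oriented $w\to b$ in $\widehat O$) minus (number oriented $b\to w$). $\mathrm{Prin}(G^+)$ is the subgroup of $\mathbb Z^W$ generated by the $r_b$, and $K(G^+)=\mathbb Z^W/\mathrm{Prin}(G^+)$. For a reference perfect matching $M_0=M_{T_0}$, use the orientation $\widehat{O_{T_0}}$. For a perfect matching $M$, $M_0\triangle M$ is a disjoint union of cycles; define $d\in\mathbb Z^W$ by $d(w)=1$ if $w$ lies on $M_0\triangle M$ and its two incident edges in $M_0\triangle M$ have opposite orientations (one positively, one negatively oriented), and $d(w)=0$ otherwise; $\Psi_{M_0}(M)=[d]\in K(G^+)$. *)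

theory Defs
  imports Main
begin

text \<open>A connected plane multigraph G is encoded by its set of darts (half-edges
  with a direction), the involution alpha reversing a dart, and the permutation
  sigma giving the counterclockwise cyclic order of the darts leaving each vertex.
  Vertices are the sigma-orbits, edges are the pairs {d, alpha d}, faces are the
  orbits of phi = sigma o alpha; the phi-orbit of d is the face lying to the
  right of d. The outer (infinite) face is the face to the right of the dart
  outer_dart. A dart d goes from its tail vert d to its head vert (alpha d).\<close>

record 'd pmap =
  darts :: "'d set"
  alpha :: "'d \<Rightarrow> 'd"
  sigma :: "'d \<Rightarrow> 'd"
  outer_dart :: 'd

definition orb :: "('d \<Rightarrow> 'd) \<Rightarrow> 'd \<Rightarrow> 'd set" where
  "orb f d = {(f ^^ n) d | n. True}"

definition perm_on :: "'d set \<Rightarrow> ('d \<Rightarrow> 'd) \<Rightarrow> bool" where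
  "perm_on A f \<longleftrightarrow> bij_betw f A A \<and> (\<forall>x. x \<notin> A \<longrightarrow> f x = x)"

definition phi :: "'d pmap \<Rightarrow> 'd \<Rightarrow> 'd" where
  "phi G = sigma G \<circ> alpha G"

definition vert :: "'d pmap \<Rightarrow> 'd \<Rightarrow> 'd set" where
  "vert G d = orb (sigma G) d"

definition edg :: "'d pmap \<Rightarrow> 'd \<Rightarrow> 'd set" where
  "edg G d = {d, alpha G d}"

definition rface :: "'d pmap \<Rightarrow> 'd \<Rightarrow> 'd set" where
  "rface G d = orb (phi G) d"

definition lface :: "'d pmap \<Rightarrow> 'd \<Rightarrow> 'd set" where
  "lface G d = rface G (alpha G d)"

definition verts :: "'d pmap \<Rightarrow> 'd set set" where
  "verts G = vert G ` darts G"

definition edges :: "'d pmap \<Rightarrow> 'd set set" where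
  "edges G = edg G ` darts G"

definition faces :: "'d pmap \<Rightarrow> 'd set set" where
  "faces G = rface G ` darts G"

definition outer_face :: "'d pmap \<Rightarrow> 'd set" where
  "outer_face G = rface G (outer_dart G)"

definition map_connected :: "'d pmap \<Rightarrow> bool" where
  "map_connected G \<longleftrightarrow>
     darts G \<times> darts G \<subseteq>
       ({(x, alpha G x) | x. x \<in> darts G} \<union> {(x, sigma G x) | x. x \<in> darts G})\<^sup>*"

text \<open>finite connected plane graph (genus 0 by Euler's formula), multi-edges
  allowed, no loops\<close>
definition plane_graph :: "'d pmap \<Rightarrow> bool" where
  "plane_graph G \<longleftrightarrow>
     finite (darts G) \<and> perm_on (darts G) (alpha G) \<and> perm_on (darts G) (sigma G) \<and>
     (\<forall>d \<in> darts G. alpha G d \<noteq> d \<and> alpha G (alpha G d) = d) \<and>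
     (\<forall>d \<in> darts G. vert G (alpha G d) \<noteq> vert G d) \<and>
     map_connected G \<and>
     int (card (verts G)) - int (card (edges G)) + int (card (faces G)) = 2 \<and>
     outer_dart G \<in> darts G"

definition on_outer_face :: "'d pmap \<Rightarrow> 'd set \<Rightarrow> bool" where
  "on_outer_face G v \<longleftrightarrow> (\<exists>d \<in> outer_face G. vert G d = v)"

definition walk_in :: "'d pmap \<Rightarrow> 'd set set \<Rightarrow> 'd list \<Rightarrow> bool" where
  "walk_in G S ds \<longleftrightarrow> ds \<noteq> [] \<and> set ds \<subseteq> darts G \<and> (\<forall>d \<in> set ds. edg G d \<in> S) \<and>
     (\<forall>i. Suc i < length ds \<longrightarrow> vert G (alpha G (ds ! i)) = vert G (ds ! Suc i))"

definition path_verts :: "'d pmap \<Rightarrow> 'd list \<Rightarrow> 'd set list" where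
  "path_verts G ds = map (vert G) ds @ [vert G (alpha G (last ds))]"

definition simple_path :: "'d pmap \<Rightarrow> 'd set set \<Rightarrow> 'd list \<Rightarrow> bool" where
  "simple_path G S ds \<longleftrightarrow> walk_in G S ds \<and> distinct (path_verts G ds)"

definition dcycle :: "'d pmap \<Rightarrow> 'd set set \<Rightarrow> 'd list \<Rightarrow> bool" where
  "dcycle G S ds \<longleftrightarrow> walk_in G S ds \<and> vert G (alpha G (last ds)) = vert G (hd ds) \<and>
     distinct (map (vert G) ds) \<and> distinct (map (edg G) ds)"

definition joined_in :: "'d pmap \<Rightarrow> 'd set set \<Rightarrow> 'd set \<Rightarrow> 'd set \<Rightarrow> bool" where
  "joined_in G S u v \<longleftrightarrow> u = v \<or>
     (\<exists>ds. simple_path G S ds \<and> vert G (hd ds) = u \<and> vert G (alpha G (last ds)) = v)"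

definition spanning_tree :: "'d pmap \<Rightarrow> 'd set set \<Rightarrow> bool" where
  "spanning_tree G T \<longleftrightarrow> T \<subseteq> edges G \<and>
     (\<forall>u \<in> verts G. \<forall>v \<in> verts G. joined_in G T u v) \<and> \<not> (\<exists>ds. dcycle G T ds)"

text \<open>Faces outside a cycle with edge set C: those reachable from the outer face
  in the dual graph without crossing an edge of C.\<close>
definition dual_step :: "'d pmap \<Rightarrow> 'd set set \<Rightarrow> ('d set \<times> 'd set) set" where
  "dual_step G C = {(rface G x, lface G x) | x. x \<in> darts G \<and> edg G x \<notin> C}"

definition inside_faces :: "'d pmap \<Rightarrow> 'd set set \<Rightarrow> 'd set set" where
  "inside_faces G C = faces G - {f. (outer_face G, f) \<in> (dual_step G C)\<^sup>*}"

text \<open>A directed cycle is counterclockwise iff its interior lies on its left.\<close>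
definition ccw_cycle :: "'d pmap \<Rightarrow> 'd list \<Rightarrow> bool" where
  "ccw_cycle G ds \<longleftrightarrow> (\<forall>x \<in> set ds. lface G x \<in> inside_faces G (edg G ` set ds))"

text \<open>An orientation is represented by the set of darts giving the chosen
  direction of each edge. O_T: tree edges away from q, non-tree edges
  counterclockwise around their fundamental cycle.\<close>
definition OT :: "'d pmap \<Rightarrow> 'd set \<Rightarrow> 'd set set \<Rightarrow> 'd set" where
  "OT G q T = {d \<in> darts G.
     (edg G d \<in> T \<and> (\<exists>ds. simple_path G T ds \<and> vert G (hd ds) = q \<and> last ds = d)) \<or>
     (edg G d \<notin> T \<and> (\<exists>ds. dcycle G (insert (edg G d) T) ds \<and> d \<in> set ds \<and> ccw_cycle G ds))}"

text \<open>White vertices: edges of G. Half-edges of G^+: (d, True) is the half of the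
  edge edg d between w_(edg d) and the tail vert d of d; (d, False) is the half
  of the dual edge (edg d)^* lying on the right side of d, between
  w_(edg d) and the face rface d.\<close>

type_synonym 'd hedge = "'d \<times> bool"

definition white_vs :: "'d pmap \<Rightarrow> 'd set set" where
  "white_vs G = edges G"

definition black_vs :: "'d pmap \<Rightarrow> 'd set \<Rightarrow> ('d set + 'd set) set" where
  "black_vs G q = Inl ` (verts G - {q}) \<union> Inr ` (faces G - {outer_face G})"

definition hedges :: "'d pmap \<Rightarrow> 'd set \<Rightarrow> 'd hedge set" where
  "hedges G q = {(d, True) | d. d \<in> darts G \<and> vert G d \<noteq> q} \<union>
                {(d, False) | d. d \<in> darts G \<and> rface G d \<noteq> outer_face G}"

definition white_end :: "'d pmap \<Rightarrow> 'd hedge \<Rightarrow> 'd set" where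
  "white_end G h = edg G (fst h)"

definition black_end :: "'d pmap \<Rightarrow> 'd hedge \<Rightarrow> 'd set + 'd set" where
  "black_end G h = (if snd h then Inl (vert G (fst h)) else Inr (rface G (fst h)))"

text \<open>Induced orientation: h is positively oriented (white to black) in O-hat.
  Primal half-edge (d,True): the O-direction of edg d has its head at vert d.
  Dual half-edge (d,False): e^* is oriented as the 90 degree counterclockwise
  rotation of the O-direction o of e, i.e. from the right side of o to the left
  side of o; the half on the right side of d points towards its black end iff the
  right side of d is the left side of o, i.e. o = alpha d.\<close>
definition pos :: "'d pmap \<Rightarrow> 'd set \<Rightarrow> 'd hedge \<Rightarrow> bool" where
  "pos G Or h = (if snd h
     then (\<exists>od \<in> Or. edg G od = edg G (fst h) \<and> vert G (alpha G od) = vert G (fst h))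
     else alpha G (fst h) \<in> Or)"

text \<open>Kasteleyn cokernel: r_b and the principal subgroup (integer combinations
  of the finitely many r_b). Elements of Z^W are functions 'd set \<Rightarrow> int.\<close>
definition r_vec :: "'d pmap \<Rightarrow> 'd set \<Rightarrow> 'd set \<Rightarrow> ('d set + 'd set) \<Rightarrow> 'd set \<Rightarrow> int" where
  "r_vec G q Or b w =
     int (card {h \<in> hedges G q. white_end G h = w \<and> black_end G h = b \<and> pos G Or h})
   - int (card {h \<in> hedges G q. white_end G h = w \<and> black_end G h = b \<and> \<not> pos G Or h})"

definition Prin :: "'d pmap \<Rightarrow> 'd set \<Rightarrow> 'd set \<Rightarrow> ('d set \<Rightarrow> int) set" where
  "Prin G q Or = {x. \<exists>c :: ('d set + 'd set) \<Rightarrow> int.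
                    x = (\<lambda>w. \<Sum>b \<in> black_vs G q. c b * r_vec G q Or b w)}"

text \<open>equality of classes in K(G^+) = Z^W / Prin(G^+)\<close>
definition same_class :: "'d pmap \<Rightarrow> 'd set \<Rightarrow> 'd set \<Rightarrow> ('d set \<Rightarrow> int) \<Rightarrow> ('d set \<Rightarrow> int) \<Rightarrow> bool" where
  "same_class G q Or x y \<longleftrightarrow> (\<lambda>w. x w - y w) \<in> Prin G q Or"

definition temperley :: "'d pmap \<Rightarrow> 'd set \<Rightarrow> 'd set set \<Rightarrow> 'd hedge set" where
  "temperley G q T =
     {h \<in> hedges G q. snd h \<and> edg G (fst h) \<in> T \<and> pos G (OT G q T) h} \<union>
     {h \<in> hedges G q. \<not> snd h \<and> edg G (fst h) \<notin> T \<and> pos G (OT G q T) h}"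

definition psi_div :: "'d pmap \<Rightarrow> 'd set \<Rightarrow> 'd set \<Rightarrow> 'd hedge set \<Rightarrow> 'd hedge set \<Rightarrow> 'd set \<Rightarrow> int" where
  "psi_div G q O0 M0 M w =
     (if w \<in> white_vs G \<and>
         (\<exists>h1 \<in> M0 - M \<union> (M - M0). \<exists>h2 \<in> M0 - M \<union> (M - M0). h1 \<noteq> h2 \<and>
            white_end G h1 = w \<and> white_end G h2 = w \<and> pos G O0 h1 \<noteq> pos G O0 h2)
      then 1 else 0)"

end

theory Submission
  imports Defs
begin

text \<open>For every edge e the orientation O_T selects exactly one of the two darts of e, and the
  Temperley matching M_T uses at w_e the half-edge pointing to the head of that dart (tree edges)
  or to the face on its left (nontree edges). Such a half-edge is positively oriented for O_T
  and is not deleted in G^+. Since positivity of a half-edge only depends on which dart of e it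
  is attached to, the half-edges of M_T0 and M_T at w_e have opposite O_T0-orientation exactly
  when O_T0 and O_T select different darts of e. So the divisor of Psi(M_T) is chi itself.

  The substance is that O_T is well defined. For tree edges this is uniqueness of tree paths
  from q. For a nontree edge e, removing e^* from the dual spanning tree splits the faces into
  two classes (that they do not stay connected is Euler's formula); their common boundary is
  the fundamental cycle of e, so every dart of that cycle has the interior on the same hand.\<close>

section \<open>Orbits, parity counts and connectivity\<close>

lemma perm_on_funpow_in: "perm_on A f \<Longrightarrow> x \<in> A \<Longrightarrow> (f ^^ n) x \<in> A"
  unfolding perm_on_def by (induction n) (auto simp: bij_betw_def)

lemma perm_on_funpow_return:
  assumes "finite A" "perm_on A f" "x \<in> A"
  shows "\<exists>n>0. (f ^^ n) x = x"
proof -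
  let ?g = "\<lambda>n. (f ^^ n) x"
  have "?g ` {0..card A} \<subseteq> A" using perm_on_funpow_in[OF assms(2,3)] by auto
  then have "card (?g ` {0..card A}) \<le> card A" by (rule card_mono[OF assms(1)])
  then have "card (?g ` {0..card A}) < card {0..card A}" by simp
  then have "\<not> inj_on ?g {0..card A}" by (rule pigeonhole)
  then obtain i j where "i \<noteq> j" "?g i = ?g j" unfolding inj_on_def by blast
  then obtain i j where ij: "i < j" "(f ^^ i) x = (f ^^ j) x" by (metis linorder_neqE_nat)
  have "(f ^^ i) ((f ^^ (j - i)) x) = (f ^^ (i + (j - i))) x" by (simp only: funpow_add comp_apply)
  also have "\<dots> = (f ^^ i) x" using ij by simp
  finally have eq: "(f ^^ i) ((f ^^ (j - i)) x) = (f ^^ i) x" .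
  have "inj_on (f ^^ i) A"
    using assms(2) unfolding perm_on_def by (auto intro: bij_betw_funpow bij_betw_imp_inj_on)
  then have "(f ^^ (j - i)) x = x" using eq perm_on_funpow_in[OF assms(2,3)] assms(3) by (rule inj_onD)
  then show ?thesis using ij by (intro exI[of _ "j - i"]) auto
qed

lemma orb_self: "x \<in> orb f x"
  unfolding orb_def by (auto intro: exI[of _ 0])

lemma orb_step: "f x \<in> orb f x"
  unfolding orb_def by (auto intro: exI[of _ 1])

lemma orb_trans: "y \<in> orb f x \<Longrightarrow> z \<in> orb f y \<Longrightarrow> z \<in> orb f x"
proof -
  assume "y \<in> orb f x" "z \<in> orb f y"
  then obtain m n where "y = (f ^^ m) x" "z = (f ^^ n) y" unfolding orb_def by auto
  then have "z = (f ^^ (n + m)) x" by (simp add: funpow_add)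
  then show ?thesis unfolding orb_def by blast
qed

lemma orb_sym:
  assumes "finite A" "perm_on A f" "x \<in> A" "y \<in> orb f x"
  shows "x \<in> orb f y"
proof -
  obtain m where m: "y = (f ^^ m) x" using assms(4) unfolding orb_def by auto
  obtain n where n: "n > 0" "(f ^^ n) x = x" using perm_on_funpow_return[OF assms(1-3)] by blast
  have "(f ^^ (m * n)) x = x" using n(2) by (induction m) (auto simp: funpow_add)
  have "(f ^^ (m * n - m)) y = (f ^^ (m*n - m + m)) x" by (simp add: m funpow_add)
  also have "m * n - m + m = m * n" using n(1) by (simp add: mult_le_mono)
  finally show ?thesis using \<open>(f ^^ (m * n)) x = x\<close> unfolding orb_def by auto
qed

lemma orb_eq:
  assumes "finite A" "perm_on A f" "x \<in> A" "y \<in> orb f x"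
  shows "orb f y = orb f x"
proof
  show "orb f y \<subseteq> orb f x" using assms(4) orb_trans[of y f x] by blast
  show "orb f x \<subseteq> orb f y" using orb_sym[OF assms] orb_trans[of x f y] by blast
qed

lemma hd_notin_set_drop: "distinct xs \<Longrightarrow> 0 < k \<Longrightarrow> hd xs \<notin> set (drop k xs)"
  by (cases xs; cases k) (auto dest: in_set_dropD)

lemma card_fiber_inj_on:
  assumes "inj_on f A"
  shows "card {x \<in> A. f x = v} = (if v \<in> f ` A then 1 else 0)"
proof (cases "v \<in> f ` A")
  case True
  then obtain a where a: "a \<in> A" "f a = v" by auto
  have "{x \<in> A. f x = v} = {a}" using a assms unfolding inj_on_def by auto
  then show ?thesis using True by simp
next
  case False
  then have "{x \<in> A. f x = v} = {}" by auto
  then show ?thesis using False by (metis card.empty)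
qed

lemma even_card_sym_diff:
  assumes "finite P" "finite Q" "even (card P)" "even (card Q)"
  shows "even (card (sym_diff P Q))"
proof -
  have pe: "P = (P - Q) \<union> (P \<inter> Q)" by blast
  have a: "card P = card (P - Q) + card (P \<inter> Q)"
    using assms(1) by (subst pe, intro card_Un_disjoint) auto
  have qe: "Q = (Q - P) \<union> (P \<inter> Q)" by blast
  have b: "card Q = card (Q - P) + card (P \<inter> Q)"
    using assms(2) by (subst qe, intro card_Un_disjoint) auto
  have c: "card ((P - Q) \<union> (Q - P)) = card (P - Q) + card (Q - P)"
    using assms(1,2) by (intro card_Un_disjoint) auto
  show ?thesis using a b c assms(3,4) by presburger
qed

lemma even_card_changes_iff:
  fixes b :: "nat \<Rightarrow> bool"
  shows "even (card {k. k < p \<and> b k \<noteq> b (Suc k)}) \<longleftrightarrow> b p = b 0"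
proof (induction p)
  case 0
  show ?case by simp
next
  case (Suc p)
  have "{k. k < Suc p \<and> b k \<noteq> b (Suc k)} =
        {k. k < p \<and> b k \<noteq> b (Suc k)} \<union> (if b p \<noteq> b (Suc p) then {p} else {})"
    by (auto simp: less_Suc_eq)
  then show ?case
    using Suc.IH by (cases "b p = b (Suc p)") auto
qed

lemma rtrancl_crossing:
  assumes "(a, b) \<in> R\<^sup>*" "a \<in> U" "b \<notin> U"
  shows "\<exists>g h. (g, h) \<in> R \<and> g \<in> U \<and> h \<notin> U"
  using assms by (induction rule: rtrancl_induct) blast+

definition rdist :: "('v \<times> 'v) set \<Rightarrow> 'v \<Rightarrow> 'v \<Rightarrow> nat" where
  "rdist R r v = (LEAST n. (v, r) \<in> R ^^ n)"

lemma rdist_relpow: "(v, r) \<in> R\<^sup>* \<Longrightarrow> (v, r) \<in> R ^^ rdist R r v"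
  unfolding rdist_def by (metis LeastI rtrancl_imp_relpow)

lemma rdist_step:
  assumes vr: "(v, r) \<in> R\<^sup>*" and ne: "v \<noteq> r"
  shows "\<exists>w. (v, w) \<in> R \<and> Suc (rdist R r w) = rdist R r v"
proof -
  have path: "(v, r) \<in> R ^^ rdist R r v" using rdist_relpow[OF vr] .
  then obtain k where k: "rdist R r v = Suc k" using ne by (cases "rdist R r v") auto
  then obtain w where w: "(v, w) \<in> R" "(w, r) \<in> R ^^ k" using path relpow_Suc_D2 by metis
  have "rdist R r w \<le> k" unfolding rdist_def using w(2) by (rule Least_le)
  moreover have "(v, r) \<in> R ^^ Suc (rdist R r w)"
    using relpow_Suc_I2[OF w(1) rdist_relpow] w(2) relpow_imp_rtrancl by blast
  then have "rdist R r v \<le> Suc (rdist R r w)" unfolding rdist_def by (rule Least_le)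
  ultimately show ?thesis using w(1) k by (intro exI[of _ w]) simp
qed

text \<open>A connected graph has at least card V - 1 edges. The graph is given by darts X with tail s
  and head t, realising the adjacency R and identified into edges by E, where a dart and its
  reversal have the same image.\<close>

lemma card_le_Suc_card_of_connected:
  fixes s t :: "'e \<Rightarrow> 'v" and E :: "'e \<Rightarrow> 'k"
  assumes fX: "finite X" and fV: "finite V" and r: "r \<in> V"
    and conn: "\<forall>v\<in>V. (v, r) \<in> R\<^sup>*"
    and real: "\<forall>a b. (a, b) \<in> R \<longrightarrow> (\<exists>x\<in>X. s x = a \<and> t x = b)"
    and ed: "\<forall>x\<in>X. \<forall>y\<in>X. E x = E y \<longrightarrow> (s x = s y \<and> t x = t y) \<or> (s x = t y \<and> t x = s y)"
  shows "card V \<le> card (E ` X) + 1"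
proof -
  have "\<forall>v \<in> V - {r}. \<exists>x \<in> X. s x = v \<and> Suc (rdist R r (t x)) = rdist R r v"
    using rdist_step conn real by (metis Diff_iff singletonI)
  then obtain parent where parent: "\<And>v. v \<in> V - {r} \<Longrightarrow>
      parent v \<in> X \<and> s (parent v) = v \<and> Suc (rdist R r (t (parent v))) = rdist R r v"
    by metis
  have "inj_on (E \<circ> parent) (V - {r})"
  proof (rule inj_onI)
    fix v1 v2 assume v: "v1 \<in> V - {r}" "v2 \<in> V - {r}" and "(E \<circ> parent) v1 = (E \<circ> parent) v2"
    then have "(v1 = v2) \<or> (v1 = t (parent v2) \<and> t (parent v1) = v2)"
      using ed parent[OF v(1)] parent[OF v(2)] by (metis comp_apply)
    then show "v1 = v2" using parent[OF v(1)] parent[OF v(2)] by auto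
  qed
  moreover have "(E \<circ> parent) ` (V - {r}) \<subseteq> E ` X" using parent by auto
  ultimately have "card (V - {r}) \<le> card (E ` X)" using card_inj_on_le fX by blast
  then show ?thesis using fV r by (simp add: card_Diff_singleton)
qed

section \<open>Plane maps, walks and tree paths\<close>

locale plane_map =
  fixes G :: "'d pmap"
  assumes plane: "plane_graph G"
begin

abbreviation "D \<equiv> darts G"
abbreviation "al \<equiv> alpha G"
abbreviation "sg \<equiv> sigma G"

lemma finite_darts: "finite D" using plane unfolding plane_graph_def by simp

lemma alpha_perm: "perm_on D al" using plane unfolding plane_graph_def by simp

lemma sigma_perm: "perm_on D sg" using plane unfolding plane_graph_def by simp

lemma alpha_in[simp]: "x \<in> D \<Longrightarrow> al x \<in> D"
  using alpha_perm unfolding perm_on_def bij_betw_def by auto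

lemma alpha_alpha[simp]: "x \<in> D \<Longrightarrow> al (al x) = x"
  using plane unfolding plane_graph_def by simp

lemma alpha_neq: "x \<in> D \<Longrightarrow> al x \<noteq> x"
  using plane unfolding plane_graph_def by simp

lemma vert_alpha_neq: "x \<in> D \<Longrightarrow> vert G (al x) \<noteq> vert G x"
  using plane unfolding plane_graph_def by simp

lemma outer_dart_in: "outer_dart G \<in> D" using plane unfolding plane_graph_def by simp

lemma alpha_inj: "inj_on al D"
  unfolding inj_on_def by (metis alpha_alpha)

lemma phi_perm: "perm_on D (phi G)"
proof -
  have "bij_betw (sg \<circ> al) D D" using alpha_perm sigma_perm unfolding perm_on_def
    by (auto intro: bij_betw_trans)
  moreover have "\<forall>x. x \<notin> D \<longrightarrow> (sg \<circ> al) x = x" using alpha_perm sigma_perm unfolding perm_on_def by simp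
  ultimately show ?thesis unfolding perm_on_def phi_def by simp
qed

lemma vert_eq_iff: "x \<in> D \<Longrightarrow> vert G x = vert G y \<longleftrightarrow> y \<in> vert G x"
  unfolding vert_def
proof
  assume "orb sg x = orb sg y"
  then show "y \<in> orb sg x" using orb_self[of y sg] by simp
next
  assume "x \<in> D" "y \<in> orb sg x"
  from orb_eq[OF finite_darts sigma_perm this] show "orb sg x = orb sg y" by simp
qed

lemma vert_sigma[simp]: "x \<in> D \<Longrightarrow> vert G (sg x) = vert G x"
  unfolding vert_def using orb_eq[OF finite_darts sigma_perm, of x "sg x"] orb_step[of sg x] by simp

lemma vert_sigma_funpow: "x \<in> D \<Longrightarrow> vert G ((sg ^^ k) x) = vert G x"
proof (induction k)
  case 0
  then show ?case by simp
next
  case (Suc k)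
  have "(sg ^^ k) x \<in> D" using perm_on_funpow_in[OF sigma_perm Suc.prems] .
  then show ?case using Suc by simp
qed

lemma rface_phi[simp]: "x \<in> D \<Longrightarrow> rface G (phi G x) = rface G x"
  unfolding rface_def using orb_eq[OF finite_darts phi_perm, of x "phi G x"] orb_step[of "phi G" x] by simp

lemma rface_sigma: "x \<in> D \<Longrightarrow> rface G (sg x) = rface G (al x)"
  using rface_phi[of "al x"] unfolding phi_def by simp

lemma lface_eq_rface_sigma: "x \<in> D \<Longrightarrow> lface G x = rface G (sg x)"
  unfolding lface_def using rface_sigma by simp

lemma lface_alpha: "x \<in> D \<Longrightarrow> lface G (al x) = rface G x"
  unfolding lface_def by simp

lemma rface_alpha: "rface G (al x) = lface G x"
  unfolding lface_def by simp

lemma edg_eq_iff: "x \<in> D \<Longrightarrow> y \<in> D \<Longrightarrow> edg G x = edg G y \<longleftrightarrow> y = x \<or> y = al x"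
  unfolding edg_def by (auto simp: doubleton_eq_iff)

lemma edg_alpha[simp]: "x \<in> D \<Longrightarrow> edg G (al x) = edg G x"
  unfolding edg_def by auto

lemma vert_in_verts: "x \<in> D \<Longrightarrow> vert G x \<in> verts G" unfolding verts_def by simp

lemma edg_in_edges: "x \<in> D \<Longrightarrow> edg G x \<in> edges G" unfolding edges_def by simp

lemma rface_in_faces: "x \<in> D \<Longrightarrow> rface G x \<in> faces G" unfolding faces_def by simp

lemma lface_in_faces: "x \<in> D \<Longrightarrow> lface G x \<in> faces G" unfolding lface_def faces_def by simp

lemma finite_verts: "finite (verts G)" unfolding verts_def using finite_darts by simp

lemma finite_edges: "finite (edges G)" unfolding edges_def using finite_darts by simp

lemma finite_faces: "finite (faces G)" unfolding faces_def using finite_darts by simp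

lemma walk_in_Cons:
  "walk_in G S (x # p) \<longleftrightarrow> x \<in> D \<and> edg G x \<in> S \<and>
     (p = [] \<or> (walk_in G S p \<and> vert G (al x) = vert G (hd p)))"
proof (cases p)
  case (Cons y r)
  have "(\<forall>i. Suc i < length (x # p) \<longrightarrow> vert G (al ((x # p) ! i)) = vert G ((x # p) ! Suc i)) \<longleftrightarrow>
        vert G (al x) = vert G y \<and> (\<forall>i. Suc i < length p \<longrightarrow> vert G (al (p ! i)) = vert G (p ! Suc i))"
    unfolding Cons by (simp add: All_less_Suc2)
  then show ?thesis unfolding walk_in_def using Cons by auto
qed (simp add: walk_in_def)

lemma walk_in_single[simp]: "walk_in G S [x] \<longleftrightarrow> x \<in> D \<and> edg G x \<in> S"
  using walk_in_Cons[of S x "[]"] by simp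

lemma walk_in_append:
  assumes "q \<noteq> []" "r \<noteq> []"
  shows "walk_in G S (q @ r) \<longleftrightarrow> walk_in G S q \<and> walk_in G S r \<and> vert G (al (last q)) = vert G (hd r)"
  using assms(1)
proof (induction q)
  case Nil
  then show ?case by simp
next
  case (Cons x q)
  show ?case
  proof (cases "q = []")
    case True
    then show ?thesis using walk_in_Cons[of S x r] assms(2) by auto
  next
    case False
    have "walk_in G S ((x # q) @ r) \<longleftrightarrow> x \<in> D \<and> edg G x \<in> S \<and> walk_in G S (q @ r) \<and> vert G (al x) = vert G (hd q)"
      using walk_in_Cons[of S x "q @ r"] False by simp
    also have "\<dots> \<longleftrightarrow> x \<in> D \<and> edg G x \<in> S \<and> walk_in G S q \<and> walk_in G S r \<and> vert G (al (last q)) = vert G (hd r) \<and> vert G (al x) = vert G (hd q)"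
      using Cons.IH[OF False] by simp
    also have "\<dots> \<longleftrightarrow> walk_in G S (x # q) \<and> walk_in G S r \<and> vert G (al (last (x # q))) = vert G (hd r)"
      using walk_in_Cons[of S x q] False by auto
    finally show ?thesis .
  qed
qed

lemma walk_in_mono: "walk_in G S p \<Longrightarrow> S \<subseteq> S' \<Longrightarrow> walk_in G S' p"
  unfolding walk_in_def by blast

lemma walk_in_nonempty: "walk_in G S p \<Longrightarrow> p \<noteq> []" unfolding walk_in_def by simp

lemma walk_in_darts: "walk_in G S p \<Longrightarrow> set p \<subseteq> D" unfolding walk_in_def by simp

lemma walk_in_edges: "walk_in G S p \<Longrightarrow> y \<in> set p \<Longrightarrow> edg G y \<in> S" unfolding walk_in_def by simp

lemma walk_in_Diff:
  assumes "walk_in G S p" "\<forall>y \<in> set p. edg G y \<notin> X"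
  shows "walk_in G (S - X) p"
  using assms unfolding walk_in_def by blast

lemma path_verts_Cons: "p \<noteq> [] \<Longrightarrow> path_verts G (x # p) = vert G x # path_verts G p"
  unfolding path_verts_def by simp

lemma path_verts_single[simp]: "path_verts G [x] = [vert G x, vert G (al x)]"
  unfolding path_verts_def by simp

lemma path_verts_append: "r \<noteq> [] \<Longrightarrow> path_verts G (q @ r) = map (vert G) q @ path_verts G r"
  unfolding path_verts_def by simp

lemma path_verts_hd: "p \<noteq> [] \<Longrightarrow> hd (path_verts G p) = vert G (hd p)"
  unfolding path_verts_def by (cases p) auto

lemma path_verts_last: "last (path_verts G p) = vert G (al (last p))"
  unfolding path_verts_def by simp

lemma path_verts_length: "length (path_verts G p) = Suc (length p)"
  unfolding path_verts_def by simp

lemma path_verts_drop: "k < length p \<Longrightarrow> path_verts G (drop k p) = drop k (path_verts G p)"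
  unfolding path_verts_def by (simp add: drop_map)

lemma map_heads_eq_tl_path_verts:
  "walk_in G S p \<Longrightarrow> map (\<lambda>x. vert G (al x)) p = tl (path_verts G p)"
proof (induction p)
  case Nil
  then show ?case by (simp add: walk_in_def)
next
  case (Cons x q)
  show ?case
  proof (cases "q = []")
    case True
    then show ?thesis by simp
  next
    case False
    then have wq: "walk_in G S q" and h: "vert G (al x) = vert G (hd q)" using Cons.prems walk_in_Cons by auto
    have "path_verts G q = vert G (hd q) # tl (path_verts G q)"
      using path_verts_hd[OF False] path_verts_length[of q] by (metis list.collapse list.size(3) nat.distinct(1))
    then show ?thesis using Cons.IH[OF wq] path_verts_Cons[OF False] h by simp
  qed
qed

lemma path_verts_nth_Suc:
  assumes "walk_in G S p" "j < length p"
  shows "path_verts G p ! Suc j = vert G (al (p ! j))"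
proof -
  have "tl (path_verts G p) ! j = vert G (al (p ! j))"
    using map_heads_eq_tl_path_verts[OF assms(1)] assms(2) by (metis nth_map)
  moreover have "j < length (tl (path_verts G p))" using assms(2) path_verts_length[of p] by simp
  ultimately show ?thesis by (simp add: nth_tl)
qed

lemma path_verts_in_verts:
  assumes "walk_in G S p"
  shows "set (path_verts G p) \<subseteq> verts G"
proof -
  have ne: "p \<noteq> []" and pD: "set p \<subseteq> D" using assms unfolding walk_in_def by auto
  have "last p \<in> D" using ne pD by auto
  then show ?thesis unfolding path_verts_def using pD vert_in_verts by auto
qed

lemma walk_in_head_in_path_verts:
  assumes "walk_in G S p" "y \<in> set p"
  shows "vert G (al y) \<in> set (path_verts G p)"
proof -
  have "vert G (al y) \<in> set (tl (path_verts G p))"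
    using map_heads_eq_tl_path_verts[OF assms(1)] assms(2) by (metis image_eqI list.set_map)
  then show ?thesis by (metis list.sel(2) list.set_sel(2))
qed

lemma simple_path_Cons:
  assumes "p \<noteq> []"
  shows "simple_path G S (x # p) \<longleftrightarrow> x \<in> D \<and> edg G x \<in> S \<and> simple_path G S p \<and>
           vert G (al x) = vert G (hd p) \<and> vert G x \<notin> set (path_verts G p)"
  unfolding simple_path_def using walk_in_Cons[of S x p] path_verts_Cons[OF assms] assms by auto

lemma simple_path_single[simp]: "simple_path G S [x] \<longleftrightarrow> x \<in> D \<and> edg G x \<in> S"
  unfolding simple_path_def using vert_alpha_neq by auto

lemma simple_path_distinct_edges:
  assumes "simple_path G S p"
  shows "distinct (map (edg G) p)"
  using assms
proof (induction p)
  case Nil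
  then show ?case by simp
next
  case (Cons x p)
  show ?case
  proof (cases "p = []")
    case True
    then show ?thesis by simp
  next
    case False
    then have sp: "simple_path G S p" and x: "x \<in> D" and nv: "vert G x \<notin> set (path_verts G p)"
      using Cons.prems simple_path_Cons by auto
    have wp: "walk_in G S p" using sp unfolding simple_path_def by simp
    have "edg G x \<notin> edg G ` set p"
    proof
      assume "edg G x \<in> edg G ` set p"
      then obtain y where y: "y \<in> set p" "edg G y = edg G x" by auto
      have yD: "y \<in> D" using walk_in_darts[OF wp] y(1) by auto
      have "x = y \<or> x = al y" using edg_eq_iff[OF yD x] y(2) by simp
      then show False
      proof
        assume "x = y"
        then show False using y(1) nv unfolding path_verts_def by auto
      next
        assume "x = al y"
        then have "vert G (al y) = vert G x" by simp
        then show False using walk_in_head_in_path_verts[OF wp y(1)] nv by simp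
      qed
    qed
    then show ?thesis using Cons.IH[OF sp] by simp
  qed
qed

lemma simple_path_drop:
  assumes "simple_path G S p" "k < length p"
  shows "simple_path G S (drop k p) \<and> vert G (hd (drop k p)) = path_verts G p ! k \<and>
         last (drop k p) = last p"
  using assms
proof (induction p arbitrary: k)
  case Nil
  then show ?case by simp
next
  case (Cons x p)
  show ?case
  proof (cases k)
    case 0
    then show ?thesis using Cons.prems by (cases p) (auto simp: path_verts_Cons path_verts_def)
  next
    case (Suc j)
    then have j: "j < length p" and ne: "p \<noteq> []" using Cons.prems by auto
    then have sp: "simple_path G S p" using Cons.prems(1) simple_path_Cons by auto
    show ?thesis using Cons.IH[OF sp j] Suc path_verts_Cons[OF ne] ne by simp
  qed
qed

lemma simple_path_suffix:
  assumes p: "simple_path G S p" and u: "u \<in> set (path_verts G p)" "u \<noteq> vert G (al (last p))"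
  obtains k where "k < length p" "path_verts G p ! k = u" "simple_path G S (drop k p)"
    "vert G (hd (drop k p)) = u" "last (drop k p) = last p"
proof -
  obtain k where k: "k < length (path_verts G p)" "path_verts G p ! k = u"
    using u(1) by (metis in_set_conv_nth)
  have "k \<noteq> length p"
    using k(2) u(2) path_verts_last[of p] by (auto simp: path_verts_def nth_append)
  then have "k < length p" using k(1) path_verts_length by (metis less_antisym)
  then show thesis using that simple_path_drop[OF p] k(2) by blast
qed

lemma walk_in_imp_simple_path:
  assumes "walk_in G S p" "vert G (hd p) \<noteq> vert G (al (last p))"
  shows "\<exists>r. simple_path G S r \<and> vert G (hd r) = vert G (hd p) \<and>
             vert G (al (last r)) = vert G (al (last p)) \<and> set r \<subseteq> set p"
  using assms
proof (induction p)
  case Nil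
  then show ?case by (simp add: walk_in_def)
next
  case (Cons x p)
  have xD: "x \<in> D" and xS: "edg G x \<in> S" using Cons.prems(1) walk_in_Cons by auto
  show ?case
  proof (cases "p = [] \<or> vert G (al x) = vert G (al (last p))")
    case True
    then show ?thesis using xD xS by (intro exI[of _ "[x]"]) auto
  next
    case False
    then have ne: "p \<noteq> []" and mb: "vert G (al x) \<noteq> vert G (al (last p))" by auto
    then have wp: "walk_in G S p" and h: "vert G (al x) = vert G (hd p)"
      using Cons.prems(1) walk_in_Cons by auto
    obtain r where r: "simple_path G S r" "vert G (hd r) = vert G (hd p)"
      "vert G (al (last r)) = vert G (al (last p))" "set r \<subseteq> set p"
      using Cons.IH[OF wp] mb h by auto
    have rne: "r \<noteq> []" using r(1) unfolding simple_path_def walk_in_def by simp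
    have lastx: "last (x # p) = last p" using ne by simp
    show ?thesis
    proof (cases "vert G x \<in> set (path_verts G r)")
      case False
      have "simple_path G S (x # r)" using simple_path_Cons[OF rne] r xD xS h False by simp
      then show ?thesis using r lastx rne by (intro exI[of _ "x # r"]) auto
    next
      case True
      moreover have "vert G x \<noteq> vert G (al (last r))" using Cons.prems(2) r(3) lastx by simp
      ultimately obtain k where "simple_path G S (drop k r)" "vert G (hd (drop k r)) = vert G x"
          "last (drop k r) = last r"
        using simple_path_suffix[OF r(1)] by metis
      moreover have "set (drop k r) \<subseteq> set (x # p)" using r(4) set_drop_subset by fastforce
      ultimately show ?thesis using r lastx by (intro exI[of _ "drop k r"]) auto
    qed
  qed
qed

lemma walk_in_rev:
  assumes "walk_in G S p"
  shows "walk_in G S (rev (map al p)) \<and> path_verts G (rev (map al p)) = rev (path_verts G p)"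
  using assms
proof (induction p)
  case Nil
  then show ?case by (simp add: walk_in_def)
next
  case (Cons x q)
  have xD: "x \<in> D" and xS: "edg G x \<in> S" using Cons.prems walk_in_Cons by auto
  show ?case
  proof (cases "q = []")
    case True
    then show ?thesis using xD xS by simp
  next
    case False
    have wq: "walk_in G S q" and h: "vert G (al x) = vert G (hd q)"
      using Cons.prems walk_in_Cons False by auto
    have IH: "walk_in G S (rev (map al q))" "path_verts G (rev (map al q)) = rev (path_verts G q)"
      using Cons.IH[OF wq] by auto
    have qD: "set q \<subseteq> D" using walk_in_darts[OF wq] .
    have hqD: "hd q \<in> D" using qD False by auto
    have ne: "rev (map al q) \<noteq> []" using False by simp
    have lr: "last (rev (map al q)) = al (hd q)" using False by (simp add: last_rev hd_map)
    have e: "rev (map al (x # q)) = rev (map al q) @ [al x]" by simp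
    have w1: "walk_in G S (rev (map al (x # q)))"
      unfolding e using walk_in_append[OF ne, of "[al x]" S] IH(1) xD xS lr hqD h by simp
    have "path_verts G (rev (map al q)) = map (vert G) (rev (map al q)) @ [vert G (hd q)]"
      unfolding path_verts_def using lr hqD by simp
    then have pq: "rev (path_verts G q) = map (vert G) (rev (map al q)) @ [vert G (hd q)]" using IH(2) by simp
    have "path_verts G (rev (map al (x # q))) = map (vert G) (rev (map al q)) @ [vert G (al x), vert G x]"
      unfolding e using path_verts_append[of "[al x]" "rev (map al q)"] xD by simp
    also have "\<dots> = rev (path_verts G q) @ [vert G x]" using pq h by simp
    also have "\<dots> = rev (path_verts G (x # q))" using path_verts_Cons[OF False] by simp
    finally show ?thesis using w1 by simp
  qed
qed

lemma simple_path_rev: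
  assumes "simple_path G S p"
  shows "simple_path G S (rev (map al p))" "hd (rev (map al p)) = al (last p)"
    "last (rev (map al p)) = al (hd p)"
proof -
  have ne: "p \<noteq> []" using assms unfolding simple_path_def walk_in_def by simp
  have "walk_in G S p" using assms unfolding simple_path_def by simp
  from walk_in_rev[OF this] show "simple_path G S (rev (map al p))" using assms unfolding simple_path_def by simp
  show "hd (rev (map al p)) = al (last p)" using ne by (simp add: hd_rev last_map)
  show "last (rev (map al p)) = al (hd p)" using ne by (simp add: last_rev hd_map)
qed

lemma simple_path_ends_distinct:
  assumes "simple_path G S p"
  shows "vert G (hd p) \<noteq> vert G (al (last p))"
proof -
  have ne: "p \<noteq> []" using assms unfolding simple_path_def walk_in_def by simp
  have d: "distinct (path_verts G p)" using assms unfolding simple_path_def by simp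
  obtain y r where pr: "p = y # r" using ne by (cases p) auto
  have "path_verts G p = vert G y # map (vert G) r @ [vert G (al (last p))]"
    unfolding path_verts_def pr by simp
  then show ?thesis using d pr by auto
qed

lemma simple_path_closing_dcycle:
  assumes "simple_path G S R" "x \<in> D" "vert G (al x) = vert G (hd R)"
    "vert G x = vert G (al (last R))" "edg G x \<notin> edg G ` set R"
  shows "dcycle G (insert (edg G x) S) (R @ [x])"
proof -
  have ne: "R \<noteq> []" using assms unfolding simple_path_def walk_in_def by simp
  have wR: "walk_in G (insert (edg G x) S) R"
    using walk_in_mono assms(1) unfolding simple_path_def by blast
  have w: "walk_in G (insert (edg G x) S) (R @ [x])"
    using walk_in_append[OF ne, of "[x]"] wR assms(2,4) by simp
  have "path_verts G R = map (vert G) R @ [vert G x]" unfolding path_verts_def using assms(4) by simp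
  then have d1: "distinct (map (vert G) (R @ [x]))" using assms(1) unfolding simple_path_def by simp
  have d2: "distinct (map (edg G) (R @ [x]))" using simple_path_distinct_edges[OF assms(1)] assms(5) by simp
  show ?thesis unfolding dcycle_def using w d1 d2 ne assms(3) by simp
qed

lemma dcycle_mono: "dcycle G S ds \<Longrightarrow> S \<subseteq> S' \<Longrightarrow> dcycle G S' ds"
  unfolding dcycle_def using walk_in_mono by blast

lemma dcycle_map_heads:
  assumes c: "dcycle G S ds"
  shows "map (\<lambda>x. vert G (al x)) ds = tl (map (vert G) ds) @ [vert G (hd ds)]"
proof -
  have wp: "walk_in G S ds" and cl: "vert G (al (last ds)) = vert G (hd ds)"
    using c unfolding dcycle_def by auto
  then show ?thesis
    using map_heads_eq_tl_path_verts[OF wp] walk_in_nonempty[OF wp] unfolding path_verts_def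
    by (cases ds) auto
qed

lemma dcycle_distinct_heads:
  assumes c: "dcycle G S ds"
  shows "distinct (map (\<lambda>x. vert G (al x)) ds)"
proof -
  have "distinct (map (vert G) ds)" "ds \<noteq> []"
    using c walk_in_nonempty unfolding dcycle_def by auto
  then have "distinct (tl (map (vert G) ds) @ [vert G (hd ds)])" by (cases ds) auto
  then show ?thesis using dcycle_map_heads[OF c] by simp
qed

lemma dcycle_heads_image:
  assumes c: "dcycle G S ds"
  shows "(\<lambda>x. vert G (al x)) ` set ds = vert G ` set ds"
proof -
  have "ds \<noteq> []" using c walk_in_nonempty unfolding dcycle_def by auto
  then have "set (tl (map (vert G) ds) @ [vert G (hd ds)]) = vert G ` set ds" by (cases ds) auto
  then show ?thesis using dcycle_map_heads[OF c] by (metis list.set_map)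
qed

definition adj_rel :: "'d set set \<Rightarrow> ('d set \<times> 'd set) set" where
  "adj_rel S = {(vert G x, vert G (al x)) | x. x \<in> D \<and> edg G x \<in> S}"

lemma adj_rel_sym: "sym (adj_rel S)"
  unfolding sym_def adj_rel_def
proof (intro allI impI)
  fix a b assume "(a, b) \<in> {(vert G x, vert G (al x)) |x. x \<in> D \<and> edg G x \<in> S}"
  then obtain x where x: "a = vert G x" "b = vert G (al x)" "x \<in> D" "edg G x \<in> S" by auto
  then have "b = vert G (al x) \<and> a = vert G (al (al x)) \<and> al x \<in> D \<and> edg G (al x) \<in> S" by simp
  then show "(b, a) \<in> {(vert G x, vert G (al x)) |x. x \<in> D \<and> edg G x \<in> S}" by blast
qed

lemma adj_rel_rtrancl_sym: "(a, b) \<in> (adj_rel S)\<^sup>* \<Longrightarrow> (b, a) \<in> (adj_rel S)\<^sup>*"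
  using sym_rtrancl[OF adj_rel_sym] unfolding sym_def by blast

lemma walk_in_adj_rel: "walk_in G S p \<Longrightarrow> (vert G (hd p), vert G (al (last p))) \<in> (adj_rel S)\<^sup>*"
proof (induction p)
  case Nil
  then show ?case by (simp add: walk_in_def)
next
  case (Cons x p)
  have xD: "x \<in> D" and xS: "edg G x \<in> S" using Cons.prems walk_in_Cons by auto
  have st: "(vert G x, vert G (al x)) \<in> adj_rel S" unfolding adj_rel_def using xD xS by blast
  show ?case
  proof (cases "p = []")
    case True
    then show ?thesis using st by simp
  next
    case False
    then have "walk_in G S p" "vert G (al x) = vert G (hd p)" using Cons.prems walk_in_Cons by auto
    then have "(vert G (al x), vert G (al (last p))) \<in> (adj_rel S)\<^sup>*" using Cons.IH by simp
    then show ?thesis using st False by (simp add: converse_rtrancl_into_rtrancl)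
  qed
qed

lemma adj_rel_walk_in:
  assumes "(a, b) \<in> (adj_rel S)\<^sup>*"
  shows "a = b \<or> (\<exists>p. walk_in G S p \<and> vert G (hd p) = a \<and> vert G (al (last p)) = b)"
  using assms
proof (induction rule: converse_rtrancl_induct)
  case base
  then show ?case by simp
next
  case (step a c)
  then obtain x where x: "a = vert G x" "c = vert G (al x)" "x \<in> D" "edg G x \<in> S"
    unfolding adj_rel_def by blast
  show ?case
  proof (cases "c = b")
    case True
    then show ?thesis using x by (intro disjI2 exI[of _ "[x]"]) simp
  next
    case False
    then obtain p where p: "walk_in G S p" "vert G (hd p) = c" "vert G (al (last p)) = b"
      using step.IH by auto
    have ne: "p \<noteq> []" using p(1) walk_in_nonempty by blast
    have "walk_in G S (x # p)" using walk_in_Cons[of S x p] x p by simp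
    then show ?thesis using x p ne by (intro disjI2 exI[of _ "x # p"]) simp
  qed
qed

lemma adj_rel_simple_path:
  assumes "(a, b) \<in> (adj_rel S)\<^sup>*" "a \<noteq> b"
  shows "\<exists>p. simple_path G S p \<and> vert G (hd p) = a \<and> vert G (al (last p)) = b"
proof -
  obtain p where p: "walk_in G S p" "vert G (hd p) = a" "vert G (al (last p)) = b"
    using adj_rel_walk_in[OF assms(1)] assms(2) by blast
  show ?thesis using walk_in_imp_simple_path[OF p(1)] p assms(2) by auto
qed

lemma joined_in_adj_rel: "joined_in G S u v \<Longrightarrow> (u, v) \<in> (adj_rel S)\<^sup>*"
  unfolding joined_in_def simple_path_def using walk_in_adj_rel by blast

lemma card_verts_le_Suc_card:
  assumes S: "S \<subseteq> edges G" and v0: "v0 \<in> verts G"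
    and conn: "\<forall>v\<in>verts G. (v, v0) \<in> (adj_rel S)\<^sup>*"
  shows "card (verts G) \<le> card S + 1"
proof -
  let ?X = "{x \<in> D. edg G x \<in> S}"
  have "\<forall>a b. (a, b) \<in> adj_rel S \<longrightarrow> (\<exists>x\<in>?X. vert G x = a \<and> vert G (al x) = b)"
    unfolding adj_rel_def by blast
  moreover have "\<forall>x\<in>?X. \<forall>y\<in>?X. edg G x = edg G y \<longrightarrow>
     (vert G x = vert G y \<and> vert G (al x) = vert G (al y)) \<or> (vert G x = vert G (al y) \<and> vert G (al x) = vert G y)"
    using edg_eq_iff by fastforce
  moreover have "edg G ` ?X = S" using S unfolding edges_def by auto
  ultimately show ?thesis
    using card_le_Suc_card_of_connected[of ?X "verts G" v0 "adj_rel S" "vert G" "\<lambda>x. vert G (al x)" "edg G"]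
      conn finite_verts finite_darts v0 by simp
qed

lemma spanning_tree_card_verts: "spanning_tree G T \<Longrightarrow> card (verts G) \<le> card T + 1"
  using card_verts_le_Suc_card[of T "vert G (outer_dart G)"] vert_in_verts[OF outer_dart_in] joined_in_adj_rel
  unfolding spanning_tree_def by blast

definition reaches_via :: "'d set \<Rightarrow> 'd set set \<Rightarrow> 'd \<Rightarrow> bool" where
  "reaches_via q T x \<longleftrightarrow> (\<exists>ds. simple_path G T ds \<and> vert G (hd ds) = q \<and> last ds = x)"

lemma reaches_via_rev_path:
  assumes "simple_path G T P" "vert G (al (last P)) = q"
  shows "reaches_via q T (al (hd P))"
  unfolding reaches_via_def
  using simple_path_rev[OF assms(1)] assms(2) by (intro exI[of _ "rev (map al P)"]) simp

lemma spanning_tree_reaches_via_edge: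
  assumes T: "spanning_tree G T" and d0: "d0 \<in> D" "edg G d0 \<in> T" and q: "q \<in> verts G"
  shows "reaches_via q T d0 \<or> reaches_via q T (al d0)"
proof -
  define u where "u = vert G d0"
  define v where "v = vert G (al d0)"
  have uv: "u \<noteq> v" unfolding u_def v_def using vert_alpha_neq[OF d0(1)] by simp
  show ?thesis
  proof (cases "u = q \<or> v = q")
    case True
    then show ?thesis unfolding reaches_via_def u_def v_def using d0
      by (metis alpha_in edg_alpha last.simps list.sel(1) simple_path_single)
  next
    case False
    have "joined_in G T v q" using T q vert_in_verts[OF alpha_in[OF d0(1)]]
      unfolding spanning_tree_def v_def by blast
    then obtain R where R: "simple_path G T R" "vert G (hd R) = v" "vert G (al (last R)) = q"
      using False unfolding joined_in_def by auto
    have Rne: "R \<noteq> []" using R(1) unfolding simple_path_def walk_in_def by simp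
    show ?thesis
    proof (cases "u \<in> set (path_verts G R)")
      case False
      have "simple_path G T (d0 # R)" using simple_path_Cons[OF Rne] R d0 False
        unfolding u_def v_def by simp
      from reaches_via_rev_path[OF this] R(3) Rne show ?thesis by simp
    next
      case True
      then obtain k where k: "k < length R" "path_verts G R ! k = u" "simple_path G T (drop k R)"
          "vert G (hd (drop k R)) = u" "last (drop k R) = last R"
        using simple_path_suffix[OF R(1)] R(3) False by metis
      have "path_verts G R ! 0 = v"
        using path_verts_hd[OF Rne] R(2) path_verts_length[of R] by (metis hd_conv_nth list.size(3) nat.distinct(1))
      then have "k \<noteq> 0" using k(2) uv by auto
      then have "v \<notin> set (drop k (path_verts G R))"
        using hd_notin_set_drop[of "path_verts G R"] R path_verts_hd[OF Rne]
        unfolding simple_path_def path_verts_def by auto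
      then have "simple_path G T (al d0 # drop k R)"
        using simple_path_Cons[of "drop k R"] k d0 path_verts_drop[OF k(1)]
        unfolding u_def v_def by simp
      from reaches_via_rev_path[OF this] R(3) k(1,5) d0(1) show ?thesis by simp
    qed
  qed
qed

lemma reaches_via_tail_joined:
  assumes "reaches_via q T x"
  shows "(vert G x, q) \<in> (adj_rel (T - {edg G x}))\<^sup>*"
proof -
  obtain P where P: "simple_path G T P" "vert G (hd P) = q" "last P = x"
    using assms unfolding reaches_via_def by auto
  have "P \<noteq> []" using P(1) unfolding simple_path_def walk_in_def by simp
  define P' where "P' = butlast P"
  have P': "P = P' @ [x]" unfolding P'_def using \<open>P \<noteq> []\<close> P(3) append_butlast_last_id by metis
  show ?thesis
  proof (cases "P' = []")
    case True
    then show ?thesis using P(2) P' by simp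
  next
    case False
    have walk: "walk_in G T P'" and tail: "vert G (al (last P')) = vert G x"
      using walk_in_append[OF False, of "[x]"] P(1) P' unfolding simple_path_def by simp_all
    have "edg G x \<notin> edg G ` set P'"
      using simple_path_distinct_edges[OF P(1)] P' by simp
    then have "\<forall>y \<in> set P'. edg G y \<notin> {edg G x}" by auto
    then have "walk_in G (T - {edg G x}) P'" by (rule walk_in_Diff[OF walk])
    moreover have "vert G (hd P') = q" using P(2) P' False by simp
    ultimately have "(q, vert G x) \<in> (adj_rel (T - {edg G x}))\<^sup>*"
      using walk_in_adj_rel[of "T - {edg G x}" P'] tail by simp
    then show ?thesis by (rule adj_rel_rtrancl_sym)
  qed
qed

lemma spanning_tree_reaches_via_unique:
  assumes T: "spanning_tree G T" and d0: "d0 \<in> D" "edg G d0 \<in> T"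
    and t1: "reaches_via q T d0" and t2: "reaches_via q T (al d0)"
  shows False
proof -
  let ?T' = "T - {edg G d0}"
  have "(vert G d0, vert G (al d0)) \<in> (adj_rel ?T')\<^sup>*"
    using reaches_via_tail_joined[OF t1] reaches_via_tail_joined[OF t2] adj_rel_rtrancl_sym d0(1)
    by (metis edg_alpha rtrancl_trans)
  then obtain R where R: "simple_path G ?T' R" "vert G (hd R) = vert G d0" "vert G (al (last R)) = vert G (al d0)"
    using adj_rel_simple_path vert_alpha_neq[OF d0(1)] by metis
  have "edg G (al d0) \<notin> edg G ` set R"
    using walk_in_edges R(1) d0 unfolding simple_path_def by fastforce
  then have "dcycle G (insert (edg G (al d0)) ?T') (R @ [al d0])"
    using simple_path_closing_dcycle[OF R(1) alpha_in[OF d0(1)]] R(2,3) d0 by simp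
  moreover have "insert (edg G (al d0)) ?T' = T" using d0 by auto
  ultimately show False using T unfolding spanning_tree_def by metis
qed

section \<open>Even subgraphs\<close>

definition darts_at :: "'d set set \<Rightarrow> 'd set \<Rightarrow> 'd set" where
  "darts_at X v = {x \<in> D. vert G x = v \<and> edg G x \<in> X}"

definition even_degree :: "'d set set \<Rightarrow> bool" where
  "even_degree X \<longleftrightarrow> (\<forall>v. even (card (darts_at X v)))"

lemma finite_darts_at: "finite (darts_at X v)" unfolding darts_at_def using finite_darts by simp

lemma simple_path_length_less: "simple_path G S p \<Longrightarrow> length p < card (verts G)"
proof -
  assume sp: "simple_path G S p"
  then have "card (set (path_verts G p)) = Suc (length p)"
    unfolding simple_path_def by (simp add: distinct_card path_verts_length)
  moreover have "set (path_verts G p) \<subseteq> verts G"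
    using path_verts_in_verts sp unfolding simple_path_def by blast
  then have "card (set (path_verts G p)) \<le> card (verts G)" by (rule card_mono[OF finite_verts])
  ultimately show ?thesis by simp
qed

lemma even_degree_other_dart:
  assumes X: "even_degree X" and x: "x \<in> D" "edg G x \<in> X"
  obtains y where "y \<in> D" "vert G y = vert G x" "edg G y \<in> X" "y \<noteq> x"
proof -
  have "x \<in> darts_at X (vert G x)" using x unfolding darts_at_def by simp
  moreover have "darts_at X (vert G x) \<noteq> {x}"
  proof
    assume "darts_at X (vert G x) = {x}"
    then have "card (darts_at X (vert G x)) = 1" by simp
    then show False using X unfolding even_degree_def by (metis odd_one)
  qed
  ultimately obtain y where "y \<in> darts_at X (vert G x)" "y \<noteq> x" by blast
  then show thesis using that unfolding darts_at_def by blast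
qed

lemma simple_path_fresh_edge:
  assumes p: "simple_path G S p"
    and y: "y \<in> D" "vert G y = vert G (al (last p))" "y \<noteq> al (last p)"
  shows "edg G y \<notin> edg G ` set p"
proof
  assume "edg G y \<in> edg G ` set p"
  then obtain j where j: "j < length p" "edg G (p ! j) = edg G y" by (metis imageE in_set_conv_nth)
  have walk: "walk_in G S p" and dist: "distinct (path_verts G p)"
    using p unfolding simple_path_def by auto
  have pj: "p ! j \<in> D" using walk_in_darts[OF walk] j(1) by auto
  have last_pv: "path_verts G p ! length p = vert G y"
    using y(2) by (simp add: path_verts_def nth_append)
  have "y = p ! j \<or> y = al (p ! j)" using edg_eq_iff[OF pj y(1)] j(2) by simp
  then show False
  proof
    assume "y = p ! j"
    then have "path_verts G p ! j = path_verts G p ! length p"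
      using last_pv j(1) by (simp add: path_verts_def nth_append)
    then show False using nth_eq_iff_index_eq[OF dist] j(1) path_verts_length[of p] by simp
  next
    assume yj: "y = al (p ! j)"
    then have "path_verts G p ! Suc j = path_verts G p ! length p"
      using path_verts_nth_Suc[OF walk j(1)] last_pv pj by simp
    then have "Suc j = length p" using nth_eq_iff_index_eq[OF dist] j(1) path_verts_length[of p] by simp
    then have "p ! j = last p" using j(1) by (metis diff_Suc_1 last_conv_nth list.size(3) not_less0)
    then show False using yj y(3) by simp
  qed
qed

lemma simple_path_extend_or_dcycle:
  assumes p: "simple_path G S p"
    and y: "y \<in> D" "edg G y \<in> S" "vert G y = vert G (al (last p))" "edg G y \<notin> edg G ` set p"
  shows "simple_path G S (p @ [y]) \<or> (\<exists>ds. dcycle G S ds)"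
proof (cases "vert G (al y) \<in> set (path_verts G p)")
  case False
  have ne: "p \<noteq> []" using p unfolding simple_path_def walk_in_def by simp
  have "walk_in G S (p @ [y])"
    using walk_in_append[OF ne, of "[y]"] p y unfolding simple_path_def by simp
  moreover have "path_verts G (p @ [y]) = path_verts G p @ [vert G (al y)]"
    using y(3) by (simp add: path_verts_def)
  ultimately show ?thesis using p False unfolding simple_path_def by simp
next
  case True
  moreover have "vert G (al y) \<noteq> vert G (al (last p))" using vert_alpha_neq[OF y(1)] y(3) by simp
  ultimately obtain k where k: "simple_path G S (drop k p)" "vert G (hd (drop k p)) = vert G (al y)"
      "last (drop k p) = last p"
    using simple_path_suffix[OF p] by metis
  have "edg G y \<notin> edg G ` set (drop k p)" using y(4) set_drop_subset by fastforce
  then have "dcycle G (insert (edg G y) S) (drop k p @ [y])"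
    using simple_path_closing_dcycle[OF k(1) y(1)] k(2,3) y(3) by simp
  then show ?thesis using y(2) by (metis insert_absorb)
qed

text \<open>A longest simple path in a nonempty even subgraph cannot be extended at its end, so the
  other edge there closes a cycle.\<close>

lemma even_degree_dcycle:
  assumes X: "X \<subseteq> edges G" "X \<noteq> {}" "even_degree X"
  shows "\<exists>ds. dcycle G X ds"
proof (rule ccontr)
  assume no_cycle: "\<nexists>ds. dcycle G X ds"
  obtain x0 where "x0 \<in> D" "edg G x0 \<in> X" using X(1,2) unfolding edges_def by auto
  then have "simple_path G X [x0]" by simp
  then obtain p where p: "simple_path G X p"
    and longest: "\<And>p'. simple_path G X p' \<Longrightarrow> length p' \<le> length p"
    using ex_has_greatest_nat[of "simple_path G X" "[x0]" length "card (verts G)"]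
      simple_path_length_less by blast
  have walk: "walk_in G X p" using p unfolding simple_path_def by simp
  then have "p \<noteq> []" by (rule walk_in_nonempty)
  then have L: "last p \<in> D" "edg G (last p) \<in> X"
    using walk_in_darts[OF walk] walk_in_edges[OF walk] by auto
  then obtain y where y: "y \<in> D" "vert G y = vert G (al (last p))" "edg G y \<in> X" "y \<noteq> al (last p)"
    using even_degree_other_dart[OF X(3) alpha_in[of "last p"]] by auto
  then have "simple_path G X (p @ [y])"
    using simple_path_extend_or_dcycle[OF p] simple_path_fresh_edge[OF p] no_cycle by blast
  then show False using longest by fastforce
qed

lemma darts_at_dcycle:
  assumes c: "dcycle G S ds"
  shows "darts_at (edg G ` set ds) v = {x \<in> set ds. vert G x = v} \<union> al ` {x \<in> set ds. vert G (al x) = v}"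
proof -
  have ds: "set ds \<subseteq> D" using c walk_in_darts unfolding dcycle_def by blast
  show ?thesis
  proof
    show "darts_at (edg G ` set ds) v \<subseteq> {x \<in> set ds. vert G x = v} \<union> al ` {x \<in> set ds. vert G (al x) = v}"
    proof
      fix z assume "z \<in> darts_at (edg G ` set ds) v"
      then obtain x where z: "z \<in> D" "vert G z = v" "x \<in> set ds" "edg G z = edg G x"
        unfolding darts_at_def by auto
      then have "z = x \<or> z = al x" using edg_eq_iff ds by blast
      then show "z \<in> {x \<in> set ds. vert G x = v} \<union> al ` {x \<in> set ds. vert G (al x) = v}"
        using z ds by auto
    qed
  next
    show "{x \<in> set ds. vert G x = v} \<union> al ` {x \<in> set ds. vert G (al x) = v} \<subseteq> darts_at (edg G ` set ds) v"
      using ds unfolding darts_at_def by (auto intro: image_eqI)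
  qed
qed

text \<open>A directed cycle enters and leaves each of its vertices exactly once.\<close>

lemma dcycle_even_degree:
  assumes c: "dcycle G S ds"
  shows "even_degree (edg G ` set ds)"
  unfolding even_degree_def
proof
  fix v
  let ?out = "{x \<in> set ds. vert G x = v}" and ?into = "{x \<in> set ds. vert G (al x) = v}"
  have ds: "set ds \<subseteq> D" and dv: "distinct (map (vert G) ds)" and de: "distinct (map (edg G) ds)"
    using c walk_in_darts unfolding dcycle_def by blast+
  have "inj_on (vert G) (set ds)" using dv by (simp add: distinct_map)
  then have out: "card ?out = (if v \<in> vert G ` set ds then 1 else 0)" by (rule card_fiber_inj_on)
  have "inj_on (\<lambda>x. vert G (al x)) (set ds)" using dcycle_distinct_heads[OF c] by (simp add: distinct_map)
  then have "card ?into = (if v \<in> vert G ` set ds then 1 else 0)"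
    using card_fiber_inj_on dcycle_heads_image[OF c] by metis
  moreover have "card (al ` ?into) = card ?into"
    using inj_on_subset[OF alpha_inj, of ?into] ds by (intro card_image) blast
  moreover have "?out \<inter> al ` ?into = {}"
  proof -
    have "al x \<notin> set ds" if "x \<in> set ds" for x
      using de that ds alpha_neq edg_alpha unfolding distinct_map inj_on_def by (metis subsetD)
    then show ?thesis by blast
  qed
  ultimately have "card (?out \<union> al ` ?into) = 2 * (if v \<in> vert G ` set ds then 1 else 0)"
    using out card_Un_disjoint[of ?out "al ` ?into"] by simp
  then show "even (card (darts_at (edg G ` set ds) v))" using darts_at_dcycle[OF c] by simp
qed

lemma even_degree_sym_diff:
  assumes "even_degree A" "even_degree B"
  shows "even_degree (sym_diff A B)"
  unfolding even_degree_def
proof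
  fix v
  have "darts_at (sym_diff A B) v = sym_diff (darts_at A v) (darts_at B v)"
    unfolding darts_at_def by auto
  then show "even (card (darts_at (sym_diff A B) v))"
    using even_card_sym_diff[OF finite_darts_at finite_darts_at] assms unfolding even_degree_def by simp
qed

section \<open>Face boundaries and the dual graph\<close>

definition face_bdry :: "'d set set \<Rightarrow> 'd set set" where
  "face_bdry X = {edg G x | x. x \<in> D \<and> (rface G x \<in> X) \<noteq> (lface G x \<in> X)}"

lemma face_bdry_iff: "x \<in> D \<Longrightarrow> edg G x \<in> face_bdry X \<longleftrightarrow> (rface G x \<in> X) \<noteq> (lface G x \<in> X)"
proof
  assume x: "x \<in> D" and "edg G x \<in> face_bdry X"
  then obtain y where y: "y \<in> D" "edg G y = edg G x" "(rface G y \<in> X) \<noteq> (lface G y \<in> X)"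
    unfolding face_bdry_def by auto
  have "x = y \<or> x = al y" using edg_eq_iff[OF y(1) x] y(2) by simp
  then show "(rface G x \<in> X) \<noteq> (lface G x \<in> X)"
    using y(3) lface_alpha[OF y(1)] rface_alpha[of y] by auto
next
  assume "x \<in> D" "(rface G x \<in> X) \<noteq> (lface G x \<in> X)"
  then show "edg G x \<in> face_bdry X" unfolding face_bdry_def by blast
qed

lemma darts_at_vert_enum:
  assumes z0: "z0 \<in> D"
  obtains p where "0 < p" "(sg ^^ p) z0 = z0" "inj_on (\<lambda>k. (sg ^^ k) z0) {0..<p}"
    "{x \<in> D. vert G x = vert G z0} = (\<lambda>k. (sg ^^ k) z0) ` {0..<p}"
proof -
  have ex: "\<exists>n. 0 < n \<and> (sg ^^ n) z0 = z0" using perm_on_funpow_return[OF finite_darts sigma_perm z0] .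
  define p where "p = (LEAST n. 0 < n \<and> (sg ^^ n) z0 = z0)"
  have p: "0 < p" "(sg ^^ p) z0 = z0" using LeastI_ex[OF ex] unfolding p_def by auto
  have "inj_on (\<lambda>k. (sg ^^ k) z0) {0..<p}"
    using inj_on_funpow_least[OF p(2)] not_less_Least unfolding p_def by blast
  moreover have "{x \<in> D. vert G x = vert G z0} = (\<lambda>k. (sg ^^ k) z0) ` {0..<p}"
  proof
    show "{x \<in> D. vert G x = vert G z0} \<subseteq> (\<lambda>k. (sg ^^ k) z0) ` {0..<p}"
    proof
      fix x assume "x \<in> {x \<in> D. vert G x = vert G z0}"
      then have "x \<in> orb sg z0" using vert_eq_iff[OF z0, of x] unfolding vert_def by simp
      then obtain m where "x = (sg ^^ m) z0" unfolding orb_def by auto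
      then have "x = (sg ^^ (m mod p)) z0" using funpow_mod_eq[OF p(2)] by simp
      then show "x \<in> (\<lambda>k. (sg ^^ k) z0) ` {0..<p}" using p(1) by simp
    qed
    show "(\<lambda>k. (sg ^^ k) z0) ` {0..<p} \<subseteq> {x \<in> D. vert G x = vert G z0}"
      using perm_on_funpow_in[OF sigma_perm z0] vert_sigma_funpow[OF z0] by auto
  qed
  ultimately show thesis using that p by blast
qed

text \<open>Going once around a vertex, the faces between consecutive darts enter and leave X equally
  often; the boundary darts at the vertex are exactly the changes.\<close>

lemma face_bdry_even_degree: "even_degree (face_bdry X)"
  unfolding even_degree_def
proof
  fix v
  show "even (card (darts_at (face_bdry X) v))"
  proof (cases "\<exists>z0 \<in> D. vert G z0 = v")
    case False
    then have "darts_at (face_bdry X) v = {}" unfolding darts_at_def by auto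
    then show ?thesis by simp
  next
    case True
    then obtain z0 where z0: "z0 \<in> D" "vert G z0 = v" by auto
    obtain p where p: "0 < p" "(sg ^^ p) z0 = z0" "inj_on (\<lambda>k. (sg ^^ k) z0) {0..<p}"
      "{x \<in> D. vert G x = vert G z0} = (\<lambda>k. (sg ^^ k) z0) ` {0..<p}"
      by (rule darts_at_vert_enum[OF z0(1)])
    define g where "g k = (sg ^^ k) z0" for k
    define b where "b k = (rface G (g k) \<in> X)" for k
    have change: "edg G (g k) \<in> face_bdry X \<longleftrightarrow> b k \<noteq> b (Suc k)" for k
      using face_bdry_iff[OF perm_on_funpow_in[OF sigma_perm z0(1)]]
        lface_eq_rface_sigma[OF perm_on_funpow_in[OF sigma_perm z0(1)]] unfolding b_def g_def by simp
    have "darts_at (face_bdry X) v = {x \<in> g ` {0..<p}. edg G x \<in> face_bdry X}"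
      using p(4) z0(2) unfolding darts_at_def g_def by blast
    also have "\<dots> = g ` {k. k < p \<and> b k \<noteq> b (Suc k)}" using change by auto
    finally have "card (darts_at (face_bdry X) v) = card {k. k < p \<and> b k \<noteq> b (Suc k)}"
      using card_image inj_on_subset[OF p(3)] unfolding g_def by (metis (no_types, lifting) atLeast0LessThan lessThan_iff mem_Collect_eq subsetI)
    moreover have "b p = b 0" unfolding b_def g_def using p(2) by simp
    ultimately show ?thesis using even_card_changes_iff[of p b] by simp
  qed
qed

definition dual_adj :: "'d set set \<Rightarrow> ('d set \<times> 'd set) set" where
  "dual_adj N = {(rface G x, lface G x) | x. x \<in> D \<and> edg G x \<in> N}"

lemma dual_adjI: "x \<in> D \<Longrightarrow> edg G x \<in> N \<Longrightarrow> (rface G x, lface G x) \<in> dual_adj N"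
  unfolding dual_adj_def by blast

lemma dual_adjE: "(a, b) \<in> dual_adj N \<Longrightarrow> (\<And>x. x \<in> D \<Longrightarrow> edg G x \<in> N \<Longrightarrow> a = rface G x \<Longrightarrow> b = lface G x \<Longrightarrow> P) \<Longrightarrow> P"
  unfolding dual_adj_def by blast

lemma dual_adj_sym: "(a, b) \<in> dual_adj N \<Longrightarrow> (b, a) \<in> dual_adj N"
proof -
  assume "(a, b) \<in> dual_adj N"
  then obtain x where x: "x \<in> D" "edg G x \<in> N" "a = rface G x" "b = lface G x" by (rule dual_adjE)
  have "(rface G (al x), lface G (al x)) \<in> dual_adj N" using x by (intro dual_adjI) auto
  then show ?thesis using x lface_alpha[OF x(1)] rface_alpha[of x] by simp
qed

lemma dual_adj_rtrancl_sym: "(a, b) \<in> (dual_adj N)\<^sup>* \<Longrightarrow> (b, a) \<in> (dual_adj N)\<^sup>*"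
proof -
  have "sym (dual_adj N)" unfolding sym_def using dual_adj_sym by blast
  then have "sym ((dual_adj N)\<^sup>*)" by (rule sym_rtrancl)
  then show "(a, b) \<in> (dual_adj N)\<^sup>* \<Longrightarrow> (b, a) \<in> (dual_adj N)\<^sup>*" unfolding sym_def by blast
qed

lemma dual_adj_rtrancl_mono: "N \<subseteq> N' \<Longrightarrow> (a, b) \<in> (dual_adj N)\<^sup>* \<Longrightarrow> (a, b) \<in> (dual_adj N')\<^sup>*"
proof -
  assume "N \<subseteq> N'"
  then have "dual_adj N \<subseteq> dual_adj N'" unfolding dual_adj_def by blast
  then show "(a, b) \<in> (dual_adj N)\<^sup>* \<Longrightarrow> (a, b) \<in> (dual_adj N')\<^sup>*" using rtrancl_mono by blast
qed

lemma dual_step_eq_dual_adj: "dual_step G C = dual_adj (- C)"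
  unfolding dual_step_def dual_adj_def by auto

lemma dual_adj_rtrancl_side:
  assumes "\<forall>x \<in> D. edg G x \<in> N \<longrightarrow> edg G x \<notin> face_bdry X" "(a, b) \<in> (dual_adj N)\<^sup>*"
  shows "a \<in> X \<longleftrightarrow> b \<in> X"
  using assms(2)
proof (induction rule: rtrancl_induct)
  case base
  then show ?case by simp
next
  case (step b c)
  from step(2) obtain x where x: "x \<in> D" "edg G x \<in> N" "b = rface G x" "c = lface G x" by (rule dual_adjE)
  have "edg G x \<notin> face_bdry X" using assms(1) x by blast
  then show ?case using face_bdry_iff[OF x(1)] x step(3) by simp
qed

lemma faces_dual_connected:
  assumes "x \<in> D" "y \<in> D"
  shows "(rface G x, rface G y) \<in> (dual_adj UNIV)\<^sup>*"
proof -
  define Rel where "Rel = {(x, al x) | x. x \<in> D} \<union> {(x, sg x) | x. x \<in> D}"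
  have "(x, y) \<in> Rel\<^sup>*" using plane assms unfolding plane_graph_def map_connected_def Rel_def by blast
  then show ?thesis
  proof (induction rule: rtrancl_induct)
    case base
    then show ?case by simp
  next
    case (step y z)
    from step(2) obtain u where u: "u \<in> D" "y = u" "z = al u \<or> z = sg u" unfolding Rel_def by blast
    have st: "(rface G u, lface G u) \<in> dual_adj UNIV" using u(1) by (intro dual_adjI) auto
    have "rface G z = lface G u" using u(3) rface_sigma[OF u(1)] rface_alpha[of u] by auto
    then show ?case using step(3) st u(2) by (metis rtrancl.rtrancl_into_rtrancl)
  qed
qed

lemma dual_adj_rtrancl_across:
  assumes "x \<in> D" "edg G x \<in> M"
  shows "(a, rface G x) \<in> (dual_adj M)\<^sup>* \<longleftrightarrow> (a, lface G x) \<in> (dual_adj M)\<^sup>*"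
  using dual_adjI[OF assms] dual_adj_sym[OF dual_adjI[OF assms]] rtrancl_into_rtrancl by metis

lemma card_faces_le_Suc_card:
  assumes S: "S \<subseteq> edges G" and f0: "f0 \<in> faces G"
    and conn: "\<forall>f\<in>faces G. (f, f0) \<in> (dual_adj S)\<^sup>*"
  shows "card (faces G) \<le> card S + 1"
proof -
  let ?X = "{x \<in> D. edg G x \<in> S}"
  have "\<forall>a b. (a, b) \<in> dual_adj S \<longrightarrow> (\<exists>x\<in>?X. rface G x = a \<and> lface G x = b)"
    unfolding dual_adj_def by blast
  moreover have "\<forall>x\<in>?X. \<forall>y\<in>?X. edg G x = edg G y \<longrightarrow>
     (rface G x = rface G y \<and> lface G x = lface G y) \<or> (rface G x = lface G y \<and> lface G x = rface G y)"
    using edg_eq_iff lface_alpha rface_alpha by fastforce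
  moreover have "edg G ` ?X = S" using S unfolding edges_def by auto
  ultimately show ?thesis
    using card_le_Suc_card_of_connected[of ?X "faces G" f0 "dual_adj S" "rface G" "lface G" "edg G"]
      conn finite_faces finite_darts f0 by simp
qed

lemma spanning_tree_even_degree_subset:
  assumes T: "spanning_tree G T" and X: "X \<subseteq> T" "even_degree X"
  shows "X = {}"
proof (rule ccontr)
  assume "X \<noteq> {}"
  moreover have "X \<subseteq> edges G" using T X(1) unfolding spanning_tree_def by blast
  ultimately obtain ds where "dcycle G X ds" using even_degree_dcycle X(2) by blast
  then have "dcycle G T ds" using dcycle_mono X(1) by blast
  then show False using T unfolding spanning_tree_def by blast
qed

text \<open>The dual edges of the edges outside a spanning tree connect all faces: otherwise the
  boundary of a dual component would be a nonempty even subgraph of the tree.\<close>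

lemma spanning_tree_cotree_dual_connected:
  assumes T: "spanning_tree G T" and f: "f \<in> faces G" and g: "g \<in> faces G"
  shows "(f, g) \<in> (dual_adj (edges G - T))\<^sup>*"
proof (rule ccontr)
  assume not_conn: "(f, g) \<notin> (dual_adj (edges G - T))\<^sup>*"
  define U where "U = {h. (f, h) \<in> (dual_adj (edges G - T))\<^sup>*}"
  obtain x y where "x \<in> D" "y \<in> D" "f = rface G x" "g = rface G y"
    using f g unfolding faces_def by auto
  then have "(f, g) \<in> (dual_adj UNIV)\<^sup>*" using faces_dual_connected by simp
  moreover have "f \<in> U" "g \<notin> U" using not_conn unfolding U_def by auto
  ultimately obtain a b where ab: "(a, b) \<in> dual_adj UNIV" "a \<in> U" "b \<notin> U"
    using rtrancl_crossing[of f g "dual_adj UNIV" U] by blast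
  then obtain z where "z \<in> D" "a = rface G z" "b = lface G z" by (auto elim: dual_adjE)
  then have "face_bdry U \<noteq> {}" using face_bdry_iff ab by blast
  moreover have "face_bdry U \<subseteq> T"
  proof
    fix e assume "e \<in> face_bdry U"
    then obtain z where z: "z \<in> D" "e = edg G z" "(rface G z \<in> U) \<noteq> (lface G z \<in> U)"
      unfolding face_bdry_def by auto
    then have "edg G z \<notin> edges G - T"
      using dual_adj_rtrancl_across[OF z(1)] unfolding U_def by blast
    then show "e \<in> T" using z edg_in_edges by blast
  qed
  ultimately show False using spanning_tree_even_degree_subset[OF T _ face_bdry_even_degree] by blast
qed

lemma rotation_sweep:
  assumes y: "y \<in> D" and ax: "ax \<in> D" and v: "vert G y = vert G ax" and ne: "y \<noteq> ax"
    and hz: "\<And>z. z \<in> D \<Longrightarrow> vert G z = vert G y \<Longrightarrow> z \<noteq> y \<Longrightarrow> z \<noteq> ax \<Longrightarrow>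
      rface G z \<in> X \<longleftrightarrow> lface G z \<in> X"
  shows "(lface G y \<in> X) = (rface G ax \<in> X)"
proof -
  have "ax \<in> orb sg y" using vert_eq_iff[OF y, of ax] v unfolding vert_def by simp
  then have ex: "\<exists>m. (sg ^^ m) y = ax" unfolding orb_def by auto
  define m0 where "m0 = (LEAST m. (sg ^^ m) y = ax)"
  have m0: "(sg ^^ m0) y = ax" unfolding m0_def using LeastI_ex[OF ex] .
  have nax: "j < m0 \<Longrightarrow> (sg ^^ j) y \<noteq> ax" for j unfolding m0_def using not_less_Least by blast
  have m0pos: "m0 > 0" using m0 ne by (cases m0) auto
  have noret: "0 < j \<Longrightarrow> j < m0 \<Longrightarrow> (sg ^^ j) y \<noteq> y" for j
  proof
    assume j: "0 < j" "j < m0" and r: "(sg ^^ j) y = y"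
    have "(sg ^^ (m0 mod j)) y = ax" using funpow_mod_eq[OF r, of m0] m0 by simp
    moreover have "m0 mod j < m0" using j by (meson less_trans mod_less_divisor)
    ultimately show False using nax by blast
  qed
  have fD: "(sg ^^ j) y \<in> D" for j using perm_on_funpow_in[OF sigma_perm y] .
  have claim: "1 \<le> j \<Longrightarrow> j \<le> m0 \<Longrightarrow> (rface G ((sg ^^ j) y) \<in> X) = (lface G y \<in> X)" for j
  proof (induction j)
    case 0
    then show ?case by simp
  next
    case (Suc j)
    show ?case
    proof (cases "j = 0")
      case True
      then show ?thesis using lface_eq_rface_sigma[OF y] by simp
    next
      case False
      define z where "z = (sg ^^ j) y"
      have zD: "z \<in> D" unfolding z_def using fD .
      have zv: "vert G z = vert G y" unfolding z_def using vert_sigma_funpow[OF y] .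
      have zy: "z \<noteq> y" unfolding z_def using noret False Suc.prems by simp
      have za: "z \<noteq> ax" unfolding z_def using nax Suc.prems by simp
      have "(rface G z \<in> X) = (lface G z \<in> X)" using hz[OF zD zv zy za] .
      moreover have "lface G z = rface G ((sg ^^ Suc j) y)" using lface_eq_rface_sigma[OF zD] unfolding z_def by simp
      moreover have "(rface G z \<in> X) = (lface G y \<in> X)" using Suc False unfolding z_def by simp
      ultimately show ?thesis by simp
    qed
  qed
  show ?thesis using claim[of m0] m0pos m0 by simp
qed

lemma dcycle_darts_at_joint:
  assumes c: "dcycle G S ds" and i: "Suc i < length ds"
    and z: "z \<in> D" "vert G z = vert G (ds ! Suc i)" "edg G z \<in> edg G ` set ds"
  shows "z = ds ! Suc i \<or> z = al (ds ! i)"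
proof -
  have walk: "walk_in G S ds" and dv: "distinct (map (vert G) ds)"
    using c unfolding dcycle_def by auto
  have step: "vert G (al (ds ! i)) = vert G (ds ! Suc i)" using walk i unfolding walk_in_def by blast
  have "z \<in> darts_at (edg G ` set ds) (vert G (ds ! Suc i))" using z unfolding darts_at_def by simp
  then consider (out) "z \<in> set ds" | (into) w where "z = al w" "w \<in> set ds" "vert G (al w) = vert G (ds ! Suc i)"
    using darts_at_dcycle[OF c] by auto
  then show ?thesis
  proof cases
    case out
    then show ?thesis using dv z(2) i nth_mem unfolding distinct_map inj_on_def by (metis Suc_lessD)
  next
    case into
    have "inj_on (\<lambda>x. vert G (al x)) (set ds)" using dcycle_distinct_heads[OF c] by (simp add: distinct_map)
    then have "w = ds ! i" using into(2,3) step i unfolding inj_on_def by (metis Suc_lessD nth_mem)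
    then show ?thesis using into(1) by simp
  qed
qed

text \<open>If X has the cycle as its boundary, then sweeping around the vertex between two
  consecutive darts crosses no boundary edge, so all darts of the cycle have X on the same
  side.\<close>

lemma dcycle_lface_side_const:
  assumes c: "dcycle G S ds" and bdry: "face_bdry X = edg G ` set ds" and i: "i < length ds"
  shows "lface G (ds ! i) \<in> X \<longleftrightarrow> lface G (ds ! 0) \<in> X"
  using i
proof (induction i)
  case 0
  show ?case by simp
next
  case (Suc i)
  have walk: "walk_in G S ds" and de: "distinct (map (edg G) ds)" using c unfolding dcycle_def by auto
  define x where "x = ds ! i"
  define y where "y = ds ! Suc i"
  have xD: "x \<in> D" and yD: "y \<in> D" using walk_in_darts[OF walk] Suc.prems unfolding x_def y_def by auto
  have yv: "vert G (al x) = vert G y" using walk Suc.prems unfolding walk_in_def x_def y_def by blast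
  have "y \<noteq> al x"
    using de Suc.prems xD nth_eq_iff_index_eq[OF de, of "Suc i" i] unfolding x_def y_def by auto
  moreover have "rface G z \<in> X \<longleftrightarrow> lface G z \<in> X"
    if "z \<in> D" "vert G z = vert G y" "z \<noteq> y" "z \<noteq> al x" for z
  proof -
    have "edg G z \<notin> edg G ` set ds"
      using dcycle_darts_at_joint[OF c Suc.prems that(1)] that(2-4) unfolding x_def y_def by blast
    then show ?thesis using face_bdry_iff[OF that(1), of X] bdry by simp
  qed
  ultimately have "lface G y \<in> X \<longleftrightarrow> rface G (al x) \<in> X"
    using rotation_sweep[OF yD alpha_in[OF xD] yv[symmetric]] by blast
  then show ?case using Suc.IH Suc.prems rface_alpha[of x] unfolding x_def y_def by simp
qed

end

section \<open>The fundamental cycle of a nontree edge\<close>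

text \<open>Cutting the dual spanning tree at e0 leaves the two components side and other_side; their
  common boundary is the fundamental cycle of e0, which decides how O_T orients e0.\<close>

locale nontree_edge = plane_map +
  fixes T :: "'a set set" and d0 :: 'a
  assumes tree: "spanning_tree G T" and d0: "d0 \<in> darts G" and nontree: "edg G d0 \<notin> T"
begin

abbreviation e0 :: "'a set" where "e0 \<equiv> edg G d0"

definition cut_cotree :: "'a set set" where
  "cut_cotree = edges G - T - {e0}"

definition side :: "'a set set" where
  "side = {f. (rface G d0, f) \<in> (dual_adj cut_cotree)\<^sup>*}"

definition other_side :: "'a set set" where
  "other_side = {f. (lface G d0, f) \<in> (dual_adj cut_cotree)\<^sup>*}"

lemma rface_d0_in_side: "rface G d0 \<in> side"
  unfolding side_def by simp

lemma side_across:
  "x \<in> D \<Longrightarrow> edg G x \<in> cut_cotree \<Longrightarrow> rface G x \<in> side \<longleftrightarrow> lface G x \<in> side"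
  unfolding side_def using dual_adj_rtrancl_across by simp

lemma faces_of_e0_darts:
  assumes "x \<in> D" "edg G x = e0"
  shows "{rface G x, lface G x} = {rface G d0, lface G d0}"
proof -
  have "x = d0 \<or> x = al d0" using edg_eq_iff[OF d0 assms(1)] assms(2) by simp
  then show ?thesis using lface_alpha[OF d0] rface_alpha[of d0] by auto
qed

lemma face_in_side_or_other_side:
  assumes "f \<in> faces G"
  shows "f \<in> side \<or> f \<in> other_side"
proof -
  have "(rface G d0, f) \<in> (dual_adj (edges G - T))\<^sup>*"
    using spanning_tree_cotree_dual_connected[OF tree rface_in_faces[OF d0] assms] .
  then show ?thesis
  proof (induction rule: rtrancl_induct)
    case base
    show ?case by (simp add: rface_d0_in_side)
  next
    case (step g h)
    from step(2) obtain x where x: "x \<in> D" "edg G x \<in> edges G - T" "g = rface G x" "h = lface G x"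
      by (rule dual_adjE)
    show ?case
    proof (cases "edg G x = e0")
      case True
      then have "h \<in> {rface G d0, lface G d0}" using faces_of_e0_darts[OF x(1)] x(4) by blast
      then show ?thesis unfolding side_def other_side_def by auto
    next
      case False
      then have "edg G x \<in> cut_cotree" using x(2) unfolding cut_cotree_def by simp
      then show ?thesis
        using dual_adj_rtrancl_across[OF x(1)] x step(3) unfolding side_def other_side_def by blast
    qed
  qed
qed

text \<open>By Euler's formula the cut dual tree cannot still connect all faces.\<close>

lemma lface_d0_notin_side: "lface G d0 \<notin> side"
proof
  assume l: "lface G d0 \<in> side"
  have "f \<in> side" if f: "f \<in> faces G" for f
  proof (cases "f \<in> side")
    case False
    then have "(lface G d0, f) \<in> (dual_adj cut_cotree)\<^sup>*"
      using face_in_side_or_other_side[OF f] unfolding other_side_def by simp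
    then show ?thesis using l rtrancl_trans unfolding side_def by fastforce
  qed
  then have "\<forall>f\<in>faces G. (f, rface G d0) \<in> (dual_adj cut_cotree)\<^sup>*"
    using dual_adj_rtrancl_sym unfolding side_def by blast
  then have faces: "card (faces G) \<le> card cut_cotree + 1"
    using card_faces_le_Suc_card[of cut_cotree] rface_in_faces[OF d0] unfolding cut_cotree_def by blast
  have T_edges: "T \<subseteq> edges G" using tree unfolding spanning_tree_def by simp
  have fin: "finite (edges G - T)" using finite_edges by simp
  have "e0 \<in> edges G - T" using edg_in_edges[OF d0] nontree by simp
  then have "card (edges G - T) = Suc (card cut_cotree)"
    unfolding cut_cotree_def using card_Suc_Diff1[OF fin] by simp
  moreover have "card (edges G) = card T + card (edges G - T)"
    using card_Un_disjoint[of T "edges G - T"] T_edges finite_edges finite_subset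
    by (metis Diff_disjoint Diff_partition finite_Diff)
  moreover have "int (card (verts G)) - int (card (edges G)) + int (card (faces G)) = 2"
    using plane unfolding plane_graph_def by simp
  ultimately show False using faces spanning_tree_card_verts[OF tree] by linarith
qed

lemma side_face_bdry:
  assumes c: "dcycle G (insert e0 T) ds" and e0C: "e0 \<in> edg G ` set ds"
  shows "face_bdry side = edg G ` set ds"
proof -
  define C where "C = edg G ` set ds"
  have "walk_in G (insert e0 T) ds" using c unfolding dcycle_def by simp
  then have CT: "C \<subseteq> insert e0 T" using walk_in_edges unfolding C_def by blast
  have bdry: "face_bdry side \<subseteq> insert e0 T"
  proof
    fix e assume "e \<in> face_bdry side"
    then obtain z where z: "z \<in> D" "e = edg G z" "(rface G z \<in> side) \<noteq> (lface G z \<in> side)"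
      unfolding face_bdry_def by auto
    then have "edg G z \<notin> cut_cotree" using side_across by blast
    then show "e \<in> insert e0 T" using edg_in_edges[OF z(1)] z(2) unfolding cut_cotree_def by blast
  qed
  have "e0 \<in> face_bdry side"
    using face_bdry_iff[OF d0] rface_d0_in_side lface_d0_notin_side by simp
  then have "e0 \<notin> sym_diff (face_bdry side) C" using e0C unfolding C_def by blast
  then have "sym_diff (face_bdry side) C \<subseteq> T" using bdry CT by blast
  moreover have "even_degree (sym_diff (face_bdry side) C)"
    using even_degree_sym_diff[OF face_bdry_even_degree dcycle_even_degree[OF c]] unfolding C_def .
  ultimately have "sym_diff (face_bdry side) C = {}"
    using spanning_tree_even_degree_subset[OF tree] by blast
  then show ?thesis unfolding C_def by blast
qed

lemma outside_iff_same_side_as_outer: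
  assumes bdry: "face_bdry side = C" and CT: "C \<subseteq> insert e0 T" and f: "f \<in> faces G"
  shows "(outer_face G, f) \<in> (dual_step G C)\<^sup>* \<longleftrightarrow> (f \<in> side \<longleftrightarrow> outer_face G \<in> side)"
proof
  assume "(outer_face G, f) \<in> (dual_step G C)\<^sup>*"
  then show "f \<in> side \<longleftrightarrow> outer_face G \<in> side"
    using dual_adj_rtrancl_side[of "- C" side] bdry by (simp add: dual_step_eq_dual_adj)
next
  assume same: "f \<in> side \<longleftrightarrow> outer_face G \<in> side"
  have outer: "outer_face G \<in> faces G"
    unfolding outer_face_def using rface_in_faces[OF outer_dart_in] .
  have "\<exists>f0. (f0, outer_face G) \<in> (dual_adj cut_cotree)\<^sup>* \<and> (f0, f) \<in> (dual_adj cut_cotree)\<^sup>*"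
    using same face_in_side_or_other_side[OF outer] face_in_side_or_other_side[OF f]
    unfolding side_def other_side_def by blast
  then have "(outer_face G, f) \<in> (dual_adj cut_cotree)\<^sup>*"
    using dual_adj_rtrancl_sym rtrancl_trans by metis
  moreover have "cut_cotree \<subseteq> - C" using CT unfolding cut_cotree_def by auto
  ultimately show "(outer_face G, f) \<in> (dual_step G C)\<^sup>*"
    using dual_adj_rtrancl_mono by (simp add: dual_step_eq_dual_adj)
qed

lemma ccw_cycle_iff_side:
  assumes c: "dcycle G (insert e0 T) ds" and x0: "x0 \<in> set ds" "edg G x0 = e0"
  shows "ccw_cycle G ds \<longleftrightarrow> (lface G x0 \<in> side \<longleftrightarrow> outer_face G \<notin> side)"
proof -
  have bdry: "face_bdry side = edg G ` set ds"
    using side_face_bdry[OF c] x0 by blast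
  have ds: "set ds \<subseteq> D" "edg G ` set ds \<subseteq> insert e0 T"
    using walk_in_darts walk_in_edges c unfolding dcycle_def by blast+
  have same_hand: "lface G x \<in> side \<longleftrightarrow> lface G x0 \<in> side" if "x \<in> set ds" for x
    using dcycle_lface_side_const[OF c bdry] that x0(1) by (metis in_set_conv_nth)
  have inside: "lface G x \<in> inside_faces G (edg G ` set ds) \<longleftrightarrow> (lface G x \<in> side \<longleftrightarrow> outer_face G \<notin> side)"
    if "x \<in> set ds" for x
    using outside_iff_same_side_as_outer[OF bdry ds(2) lface_in_faces] ds(1) that
    unfolding inside_faces_def by (auto simp: lface_in_faces)
  show ?thesis
    unfolding ccw_cycle_def using inside same_hand x0(1) by blast
qed

lemma fundamental_dcycle:
  assumes x: "x \<in> D" "edg G x = e0"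
  shows "\<exists>ds. dcycle G (insert e0 T) ds \<and> x \<in> set ds"
proof -
  have "joined_in G T (vert G (al x)) (vert G x)"
    using tree vert_in_verts x unfolding spanning_tree_def by simp
  then obtain R where R: "simple_path G T R" "vert G (hd R) = vert G (al x)" "vert G (al (last R)) = vert G x"
    using vert_alpha_neq[OF x(1)] unfolding joined_in_def by auto
  have "walk_in G T R" using R(1) unfolding simple_path_def by simp
  then have "edg G x \<notin> edg G ` set R" using walk_in_edges x(2) nontree by force
  then have "dcycle G (insert e0 T) (R @ [x])"
    using simple_path_closing_dcycle[OF R(1) x(1)] R(2,3) x(2) by simp
  then show ?thesis by auto
qed

lemma OT_nontree_iff:
  assumes x: "x \<in> D" "edg G x = e0"
  shows "x \<in> OT G q T \<longleftrightarrow> (lface G x \<in> side \<longleftrightarrow> outer_face G \<notin> side)"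
proof -
  have "x \<in> OT G q T \<longleftrightarrow> (\<exists>ds. dcycle G (insert e0 T) ds \<and> x \<in> set ds \<and> ccw_cycle G ds)"
    unfolding OT_def using x nontree by simp
  then show ?thesis
    using ccw_cycle_iff_side[OF _ _ x(2)] fundamental_dcycle[OF x] by blast
qed

lemma OT_nontree_edge: "\<exists>z. OT G q T \<inter> e0 = {z} \<and> lface G z \<noteq> outer_face G"
proof -
  have l0: "lface G d0 \<notin> side" using lface_d0_notin_side .
  have l1: "lface G (al d0) \<in> side" using lface_alpha[OF d0] rface_d0_in_side by simp
  have e0: "e0 = {d0, al d0}" unfolding edg_def by simp
  have ne: "al d0 \<noteq> d0" using alpha_neq[OF d0] .
  have O: "d0 \<in> OT G q T \<longleftrightarrow> outer_face G \<in> side" "al d0 \<in> OT G q T \<longleftrightarrow> outer_face G \<notin> side"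
    using OT_nontree_iff[of d0] OT_nontree_iff[of "al d0"] d0 l0 l1 by auto
  show ?thesis
  proof (cases "outer_face G \<in> side")
    case True
    then have "OT G q T \<inter> e0 = {d0}" using O e0 ne by auto
    then show ?thesis using l0 True by auto
  next
    case False
    then have "OT G q T \<inter> e0 = {al d0}" using O e0 ne by auto
    then show ?thesis using l1 False by auto
  qed
qed

end

section \<open>Orientations and Temperley matchings\<close>

context plane_map begin

lemma OT_subset_darts: "OT G q T \<subseteq> D" unfolding OT_def by auto

lemma OT_tree_edge_iff: "x \<in> D \<Longrightarrow> edg G x \<in> T \<Longrightarrow> x \<in> OT G q T \<longleftrightarrow> reaches_via q T x"
  unfolding OT_def reaches_via_def by auto

lemma OT_tree_edge:
  assumes T: "spanning_tree G T" and d0: "d0 \<in> D" "edg G d0 \<in> T" and q: "q \<in> verts G"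
  shows "\<exists>z. OT G q T \<inter> edg G d0 = {z} \<and> vert G (al z) \<noteq> q"
proof -
  have head: "vert G (al x) \<noteq> q" if "reaches_via q T x" for x
    using that simple_path_ends_distinct unfolding reaches_via_def by blast
  have OT: "x \<in> OT G q T \<longleftrightarrow> reaches_via q T x" if "x \<in> {d0, al d0}" for x
    using OT_tree_edge_iff that d0 by auto
  have e: "edg G d0 = {d0, al d0}" and ne: "al d0 \<noteq> d0"
    using alpha_neq[OF d0(1)] unfolding edg_def by simp_all
  have unique: "\<not> (reaches_via q T d0 \<and> reaches_via q T (al d0))"
    using spanning_tree_reaches_via_unique[OF T d0] by blast
  from spanning_tree_reaches_via_edge[OF T d0 q] show ?thesis
  proof
    assume "reaches_via q T d0"
    then have "OT G q T \<inter> edg G d0 = {d0}" using OT unique e by auto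
    then show ?thesis using head \<open>reaches_via q T d0\<close> by blast
  next
    assume "reaches_via q T (al d0)"
    then have "OT G q T \<inter> edg G d0 = {al d0}" using OT unique e ne by auto
    then show ?thesis using head \<open>reaches_via q T (al d0)\<close> by blast
  qed
qed

text \<open>O_T orients each edge, and the side conditions say that the half-edge the Temperley
  matching uses at its white vertex survives in G^+.\<close>

lemma OT_edge_dart:
  assumes T: "spanning_tree G T" and d0: "d0 \<in> D" and q: "q \<in> verts G"
  shows "\<exists>z. OT G q T \<inter> edg G d0 = {z} \<and> (edg G d0 \<in> T \<longrightarrow> vert G (al z) \<noteq> q)
             \<and> (edg G d0 \<notin> T \<longrightarrow> lface G z \<noteq> outer_face G)"
proof (cases "edg G d0 \<in> T")
  case True
  then show ?thesis using OT_tree_edge[OF T d0 True q] by blast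
next
  case False
  interpret nontree_edge G T d0 using T d0 False plane by unfold_locales auto
  show ?thesis using OT_nontree_edge False by blast
qed

lemma pos_iff_alpha_in:
  assumes "x \<in> D" "Or \<subseteq> D"
  shows "pos G Or (x, b) \<longleftrightarrow> al x \<in> Or"
proof (cases b)
  case True
  have "(\<exists>od \<in> Or. edg G od = edg G x \<and> vert G (al od) = vert G x) \<longleftrightarrow> al x \<in> Or"
  proof
    assume "\<exists>od \<in> Or. edg G od = edg G x \<and> vert G (al od) = vert G x"
    then obtain od where od: "od \<in> Or" "edg G od = edg G x" "vert G (al od) = vert G x" by blast
    have odD: "od \<in> D" using od(1) assms(2) by auto
    have "od = x \<or> od = al x" using edg_eq_iff[OF assms(1) odD] od(2) by simp
    moreover have "od \<noteq> x" using od(3) vert_alpha_neq[OF assms(1)] by auto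
    ultimately show "al x \<in> Or" using od(1) by auto
  next
    assume "al x \<in> Or"
    then show "\<exists>od \<in> Or. edg G od = edg G x \<and> vert G (al od) = vert G x" using assms(1) by (intro bexI[of _ "al x"]) auto
  qed
  then show ?thesis using True unfolding pos_def by simp
next
  case False
  then show ?thesis unfolding pos_def by simp
qed

lemma temperley_at_edge:
  assumes d0: "d0 \<in> D"
    and z: "OT G q T \<inter> edg G d0 = {z}" "edg G d0 \<in> T \<longrightarrow> vert G (al z) \<noteq> q"
       "edg G d0 \<notin> T \<longrightarrow> lface G z \<noteq> outer_face G"
  shows "h \<in> temperley G q T \<and> white_end G h = edg G d0 \<longleftrightarrow> h = (al z, edg G d0 \<in> T)"
proof -
  have zD: "z \<in> D" using z(1) OT_subset_darts by blast
  have zw: "z \<in> edg G d0" using z(1) by blast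
  have ew: "edg G z = edg G d0" using zw d0 unfolding edg_def by auto
  have key: "x \<in> D \<Longrightarrow> edg G x = edg G d0 \<Longrightarrow> (al x \<in> OT G q T \<longleftrightarrow> x = al z)" for x
  proof -
    assume xD: "x \<in> D" and xw: "edg G x = edg G d0"
    have "al x \<in> edg G d0" using xw unfolding edg_def by auto
    then have "al x \<in> OT G q T \<longleftrightarrow> al x = z" using z(1) by blast
    also have "\<dots> \<longleftrightarrow> x = al z" using xD zD by auto
    finally show ?thesis .
  qed
  obtain x b where h: "h = (x, b)" by (cases h)
  show ?thesis
  proof
    assume a: "h \<in> temperley G q T \<and> white_end G h = edg G d0"
    have hh: "h \<in> hedges G q" using a unfolding temperley_def by auto
    have xD: "x \<in> D" using hh h unfolding hedges_def by auto
    have xw: "edg G x = edg G d0" using a h unfolding white_end_def by simp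
    have p: "pos G (OT G q T) h" using a unfolding temperley_def by auto
    then have "x = al z" using pos_iff_alpha_in[OF xD OT_subset_darts] key[OF xD xw] h by simp
    moreover have "b = (edg G d0 \<in> T)" using a h xw unfolding temperley_def by auto
    ultimately show "h = (al z, edg G d0 \<in> T)" using h by simp
  next
    assume hz: "h = (al z, edg G d0 \<in> T)"
    have azD: "al z \<in> D" using zD by simp
    have we: "white_end G h = edg G d0" using hz ew zD unfolding white_end_def by simp
    have p: "pos G (OT G q T) h" using hz pos_iff_alpha_in[OF azD OT_subset_darts] zD z(1) by auto
    show "h \<in> temperley G q T \<and> white_end G h = edg G d0"
    proof (cases "edg G d0 \<in> T")
      case True
      have "h \<in> hedges G q" using hz True z(2) azD zD unfolding hedges_def by simp
      then show ?thesis using True hz p we ew zD unfolding temperley_def by simp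
    next
      case False
      have "rface G (al z) \<noteq> outer_face G" using z(3) False rface_alpha[of z] by simp
      then have "h \<in> hedges G q" using hz False azD unfolding hedges_def by simp
      then show ?thesis using False hz p we ew zD unfolding temperley_def by simp
    qed
  qed
qed

lemma symmetric_difference_at_white:
  assumes old: "\<And>h. h \<in> M_old \<and> white_end G h = w \<longleftrightarrow> h = h_old"
    and new: "\<And>h. h \<in> M_new \<and> white_end G h = w \<longleftrightarrow> h = h_new"
  shows "(\<exists>a \<in> M_old - M_new \<union> (M_new - M_old). \<exists>b \<in> M_old - M_new \<union> (M_new - M_old).
            a \<noteq> b \<and> white_end G a = w \<and> white_end G b = w \<and> pos G Or a \<noteq> pos G Or b)
         \<longleftrightarrow> pos G Or h_old \<noteq> pos G Or h_new"
    (is "?ex \<longleftrightarrow> _")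
proof
  assume ?ex
  then obtain a b where "a \<in> M_old \<union> M_new" "b \<in> M_old \<union> M_new" "white_end G a = w" "white_end G b = w"
    "pos G Or a \<noteq> pos G Or b" by blast
  moreover from this have "a \<in> {h_old, h_new}" "b \<in> {h_old, h_new}" using old new by blast+
  ultimately show "pos G Or h_old \<noteq> pos G Or h_new" by auto
next
  assume pos: "pos G Or h_old \<noteq> pos G Or h_new"
  then have ne: "h_old \<noteq> h_new" by blast
  have h_old: "h_old \<in> M_old" "white_end G h_old = w" and h_new: "h_new \<in> M_new" "white_end G h_new = w"
    using old[of h_old] new[of h_new] by simp_all
  have "h_old \<notin> M_new" using new[of h_old] h_old(2) ne by simp
  moreover have "h_new \<notin> M_old" using old[of h_new] h_new(2) ne by simp
  ultimately show ?ex using h_old h_new ne pos by blast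
qed

lemma psi_div_temperley:
  assumes T0: "spanning_tree G T0" and T: "spanning_tree G T" and q: "q \<in> verts G"
  shows "psi_div G q (OT G q T0) (temperley G q T0) (temperley G q T) w =
         (if w \<in> white_vs G \<and> OT G q T0 \<inter> w \<noteq> OT G q T \<inter> w then 1 else 0)"
proof (cases "w \<in> white_vs G")
  case False
  then show ?thesis unfolding psi_div_def by simp
next
  case True
  then obtain d0 where d0: "d0 \<in> D" "w = edg G d0" unfolding white_vs_def edges_def by auto
  obtain z0 where z0: "OT G q T0 \<inter> edg G d0 = {z0}" "edg G d0 \<in> T0 \<longrightarrow> vert G (al z0) \<noteq> q"
    "edg G d0 \<notin> T0 \<longrightarrow> lface G z0 \<noteq> outer_face G"
    using OT_edge_dart[OF T0 d0(1) q] by blast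
  obtain z1 where z1: "OT G q T \<inter> edg G d0 = {z1}" "edg G d0 \<in> T \<longrightarrow> vert G (al z1) \<noteq> q"
    "edg G d0 \<notin> T \<longrightarrow> lface G z1 \<noteq> outer_face G"
    using OT_edge_dart[OF T d0(1) q] by blast
  have z0D: "z0 \<in> D" and z1D: "z1 \<in> D" and z1e: "z1 \<in> edg G d0"
    using z0(1) z1(1) OT_subset_darts by blast+
  define h_old where "h_old = (al z0, edg G d0 \<in> T0)"
  define h_new where "h_new = (al z1, edg G d0 \<in> T)"
  have "pos G (OT G q T0) h_old"
    using pos_iff_alpha_in[OF alpha_in[OF z0D] OT_subset_darts] z0(1) z0D unfolding h_old_def by auto
  moreover have "pos G (OT G q T0) h_new \<longleftrightarrow> z1 = z0"
    using pos_iff_alpha_in[OF alpha_in[OF z1D] OT_subset_darts] z0(1) z1D z1e unfolding h_new_def by auto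
  moreover have "h \<in> temperley G q T0 \<and> white_end G h = w \<longleftrightarrow> h = h_old" for h
    using temperley_at_edge[OF d0(1) z0] d0(2) unfolding h_old_def by simp
  moreover have "h \<in> temperley G q T \<and> white_end G h = w \<longleftrightarrow> h = h_new" for h
    using temperley_at_edge[OF d0(1) z1] d0(2) unfolding h_new_def by simp
  moreover have "OT G q T0 \<inter> w \<noteq> OT G q T \<inter> w \<longleftrightarrow> z0 \<noteq> z1" using z0(1) z1(1) d0(2) by auto
  ultimately show ?thesis
    unfolding psi_div_def using True symmetric_difference_at_white[where M_old = "temperley G q T0" and h_old = h_old]
    by auto
qed

lemma same_class_refl: "same_class G q Or x x"
  unfolding same_class_def Prin_def by (auto intro: exI[of _ "\<lambda>_. 0"])

end

text \<open>The two divisors coincide outright.\<close>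

theorem lemma3p3:
  fixes G :: "'d pmap" and q :: "'d set" and T0 T :: "'d set set"
  assumes "plane_graph G"
    and "q \<in> verts G" and "on_outer_face G q"
    and "spanning_tree G T0" and "spanning_tree G T"
  shows "same_class G q (OT G q T0)
           (psi_div G q (OT G q T0) (temperley G q T0) (temperley G q T))
           (\<lambda>w. if w \<in> white_vs G \<and> OT G q T0 \<inter> w \<noteq> OT G q T \<inter> w then 1 else 0)"
proof -
  interpret plane_map G using assms(1) by unfold_locales
  have "psi_div G q (OT G q T0) (temperley G q T0) (temperley G q T) =
        (\<lambda>w. if w \<in> white_vs G \<and> OT G q T0 \<inter> w \<noteq> OT G q T \<inter> w then 1 else 0)"
    using psi_div_temperley[OF assms(4,5,2)] by (rule ext)
  then show ?thesis using same_class_refl by simp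
qed

end
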